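(* Let $F$ be a complete discretely valued field with residue field $\kappa$ and let $p$ be a prime with $p\neq\mathrm{char}(\kappa)$. Let $L_1/F$ be an unramified cyclic extension of degree $p$ and $L_2/F$ a ramified cyclic extension of degree $p$, and let $L=L_1\times L_2$. Then $T_{L/F}(F)/R=\{1\}$.
   Context: The multinorm torus $T_{L/F}$ is the kernel of $R_{L_1/F}\mathbb{G}_m\times R_{L_2/F}\mathbb{G}_m\to\mathbb{G}_m$, $(x_1,x_2)\mapsto N_{L_1/F}(x_1)N_{L_2/F}(x_2)$. For a torus $T$ over $F$, $T(F)/R$ is the quotient of $T(F)$ by the subgroup of elements $R$-equivalent to the identity, $R$-equivalence being generated by: $x_0\sim x_1$ if some $F$-rational map $f:\mathbb{P}^1\dashrightarrow T$ satisfies $f(0)=x_0$, $f(1)=x_1$. *)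

theory Defs
  imports "HOL-Computational_Algebra.Polynomial"
begin

text \<open>A normalized discrete valuation on a field: v is only meaningful on nonzero
  elements (v 0 is irrelevant, i.e. v 0 = infinity by convention), v is a homomorphism
  from the multiplicative group onto the integers, and satisfies the ultrametric inequality.\<close>
definition discrete_valuation :: "('a::field \<Rightarrow> int) \<Rightarrow> bool" where
  "discrete_valuation v \<longleftrightarrow>
     (\<forall>x y. x \<noteq> 0 \<longrightarrow> y \<noteq> 0 \<longrightarrow> v (x * y) = v x + v y) \<and>
     (\<forall>x y. x \<noteq> 0 \<longrightarrow> y \<noteq> 0 \<longrightarrow> x + y \<noteq> 0 \<longrightarrow> min (v x) (v y) \<le> v (x + y)) \<and>
     (\<forall>n. \<exists>x. x \<noteq> 0 \<and> v x = n)"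

text \<open>Completeness with respect to the valuation topology (every Cauchy sequence converges).
  "x = y or v(x - y) >= n" means |x - y| <= 2^(-n).\<close>
definition complete_wrt :: "('a::field \<Rightarrow> int) \<Rightarrow> bool" where
  "complete_wrt v \<longleftrightarrow>
     (\<forall>X :: nat \<Rightarrow> 'a.
        (\<forall>n::int. \<exists>N. \<forall>m\<ge>N. \<forall>k\<ge>N. X m = X k \<or> n \<le> v (X m - X k)) \<longrightarrow>
        (\<exists>l. \<forall>n::int. \<exists>N. \<forall>m\<ge>N. X m = l \<or> n \<le> v (X m - l)))"

definition val_ring :: "('a::field \<Rightarrow> int) \<Rightarrow> 'a set" where
  "val_ring v = {x. x = 0 \<or> 0 \<le> v x}"

definition max_ideal :: "('a::field \<Rightarrow> int) \<Rightarrow> 'a set" where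
  "max_ideal v = {x. x = 0 \<or> 0 < v x}"

text \<open>For a prime p: char(residue field) = p iff the image of p*1 in
  residue field = val_ring / max_ideal is zero, i.e. p*1 lies in the maximal ideal.\<close>
definition residue_char_neq :: "('a::field \<Rightarrow> int) \<Rightarrow> nat \<Rightarrow> bool" where
  "residue_char_neq v p \<longleftrightarrow> (of_nat p :: 'a) \<notin> max_ideal v"

definition field_emb :: "('a::field \<Rightarrow> 'b::field) \<Rightarrow> bool" where
  "field_emb i \<longleftrightarrow> i 1 = 1 \<and> (\<forall>x y. i (x + y) = i x + i y) \<and> (\<forall>x y. i (x * y) = i x * i y)"

definition Gal :: "('a::field \<Rightarrow> 'b::field) \<Rightarrow> ('b \<Rightarrow> 'b) set" where
  "Gal i = {\<sigma>. bij \<sigma> \<and> (\<forall>x y. \<sigma> (x + y) = \<sigma> x + \<sigma> y \<and> \<sigma> (x * y) = \<sigma> x * \<sigma> y)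
                 \<and> (\<forall>a. \<sigma> (i a) = i a)}"

text \<open>[L:F] = n: L has an F-basis b 0, ..., b (n-1).\<close>
definition ext_degree_eq :: "('a::field \<Rightarrow> 'b::field) \<Rightarrow> nat \<Rightarrow> bool" where
  "ext_degree_eq i n \<longleftrightarrow>
     (\<exists>b :: nat \<Rightarrow> 'b. \<forall>y. \<exists>!c :: nat \<Rightarrow> 'a. (\<forall>k\<ge>n. c k = 0) \<and> y = (\<Sum>k<n. i (c k) * b k))"

definition cyclic_ext :: "('a::field \<Rightarrow> 'b::field) \<Rightarrow> nat \<Rightarrow> bool" where
  "cyclic_ext i n \<longleftrightarrow> field_emb i \<and> ext_degree_eq i n \<and> card (Gal i) = n \<and>
     (\<exists>\<sigma>\<in>Gal i. Gal i = range (\<lambda>k. \<sigma> ^^ k))"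

text \<open>Unramified: the (normalized) extension w of v to L has ramification index 1.\<close>
definition unramified_ext :: "('a::field \<Rightarrow> int) \<Rightarrow> ('a \<Rightarrow> 'b::field) \<Rightarrow> bool" where
  "unramified_ext v i \<longleftrightarrow>
     (\<exists>w :: 'b \<Rightarrow> int. discrete_valuation w \<and> (\<forall>a. a \<noteq> 0 \<longrightarrow> w (i a) = v a))"

text \<open>Ramified: the (normalized) extension w of v to L has ramification index e > 1.\<close>
definition ramified_ext :: "('a::field \<Rightarrow> int) \<Rightarrow> ('a \<Rightarrow> 'b::field) \<Rightarrow> bool" where
  "ramified_ext v i \<longleftrightarrow>
     (\<exists>(w :: 'b \<Rightarrow> int) (e::int). discrete_valuation w \<and> e > 1 \<and>
        (\<forall>a. a \<noteq> 0 \<longrightarrow> w (i a) = e * v a))"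

definition ext_norm :: "('a::field \<Rightarrow> 'b::field) \<Rightarrow> 'b \<Rightarrow> 'a" where
  "ext_norm i x = (THE a. i a = (\<Prod>\<sigma>\<in>Gal i. \<sigma> x))"

text \<open>Norm from L[t] to F[t] (coefficientwise Galois action), used for the norm
  L(t) -> F(t) of rational functions g/h.\<close>
definition poly_norm :: "('a::field \<Rightarrow> 'b::field) \<Rightarrow> 'b poly \<Rightarrow> 'a poly" where
  "poly_norm i g = (THE P. map_poly i P = (\<Prod>\<sigma>\<in>Gal i. map_poly \<sigma> g))"

definition multinorm_torus :: "('a::field \<Rightarrow> 'b::field) \<Rightarrow> ('a \<Rightarrow> 'c::field) \<Rightarrow> ('b \<times> 'c) set" where
  "multinorm_torus i1 i2 = {(x1, x2). x1 \<noteq> 0 \<and> x2 \<noteq> 0 \<and> ext_norm i1 x1 * ext_norm i2 x2 = 1}"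

text \<open>Elementary R-link: an F-rational map f : P^1 --> T, i.e. a point of
  T(F(t)) = pairs (g1/h1, g2/h2) in L1(t)^* x L2(t)^* with N(g1/h1) N(g2/h2) = 1,
  which is regular (and invertible) at t = 0 and t = 1, with f(0) = x and f(1) = y.\<close>
definition R_link :: "('a::field \<Rightarrow> 'b::field) \<Rightarrow> ('a \<Rightarrow> 'c::field) \<Rightarrow> ('b \<times> 'c) \<Rightarrow> ('b \<times> 'c) \<Rightarrow> bool" where
  "R_link i1 i2 x y \<longleftrightarrow>
     (\<exists>(g1 :: 'b poly) (h1 :: 'b poly) (g2 :: 'c poly) (h2 :: 'c poly).
        poly g1 0 \<noteq> 0 \<and> poly h1 0 \<noteq> 0 \<and> poly g2 0 \<noteq> 0 \<and> poly h2 0 \<noteq> 0 \<and>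
        poly g1 1 \<noteq> 0 \<and> poly h1 1 \<noteq> 0 \<and> poly g2 1 \<noteq> 0 \<and> poly h2 1 \<noteq> 0 \<and>
        poly_norm i1 g1 * poly_norm i2 g2 = poly_norm i1 h1 * poly_norm i2 h2 \<and>
        x = (poly g1 0 / poly h1 0, poly g2 0 / poly h2 0) \<and>
        y = (poly g1 1 / poly h1 1, poly g2 1 / poly h2 1))"

definition R_equiv :: "('a::field \<Rightarrow> 'b::field) \<Rightarrow> ('a \<Rightarrow> 'c::field) \<Rightarrow> ('b \<times> 'c) \<Rightarrow> ('b \<times> 'c) \<Rightarrow> bool" where
  "R_equiv i1 i2 = (\<lambda>x y. R_link i1 i2 x y \<or> R_link i1 i2 y x)\<^sup>*\<^sup>*"

end

(*
  Write x = (x1, x2) with N(x1) N(x2) = 1. Since L1/F is unramified, v(N(x1)) = p w1(x1) lies in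
  pZ, hence so does v(N(x2)). A ramified cyclic extension of prime degree is totally ramified, so
  v(N(x2)) = w2(x2) and the residue field of L2 is that of F: after scaling by F^*, x2 becomes
  c0 (1 + m) with c0 in F and m in the maximal ideal, and N(1 + m) is a principal unit of F, hence
  a p-th power by Hensel's lemma, p being prime to the residue characteristic. So N(x1) = c^p and
  N(x2) = c^(-p) for some c in F^*. By Hilbert 90, x1 = c y1 / s(y1) and x2 = y2 / (c s(y2)) for a
  generator s of the Galois group, and the rational curve
    t |-> (f(t) Y1(t) / s(Y1(t)), Y2(t) / (f(t) s(Y2(t)))),  f(t) = 1 + (c - 1) t, Yk(t) = 1 + (yk - 1) t,
  lies on T and joins 1 (t = 0) to x (t = 1).

  That Galois conjugation preserves the valuation of L2 relies on the uniqueness of the extension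
  of the valuation of the complete field F with given ramification index, which follows from
  bounding the coordinates of a vector in an F-basis in terms of the valuation of the vector.
*)
theory Submission
  imports Defs "Jordan_Normal_Form.Determinant" "Jordan_Normal_Form.Char_Poly"
begin

section \<open>Discrete valuations\<close>

definition val_ge :: "('a::field \<Rightarrow> int) \<Rightarrow> int \<Rightarrow> 'a \<Rightarrow> bool" where
  "val_ge v n x \<longleftrightarrow> x = 0 \<or> n \<le> v x"

definition val_tendsto :: "('a::field \<Rightarrow> int) \<Rightarrow> (nat \<Rightarrow> 'a) \<Rightarrow> 'a \<Rightarrow> bool" where
  "val_tendsto v X l \<longleftrightarrow> (\<forall>n. \<forall>\<^sub>F m in sequentially. val_ge v n (X m - l))"

lemma val_ge_0 [simp]: "val_ge v n 0"
  by (simp add: val_ge_def)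

lemma val_ge_self: "val_ge v (v x) x"
  by (simp add: val_ge_def)

lemma val_ge_mono: "m \<le> n \<Longrightarrow> val_ge v n x \<Longrightarrow> val_ge v m x"
  by (auto simp: val_ge_def)

lemma val_ge_nonzero_iff: "x \<noteq> 0 \<Longrightarrow> val_ge v n x \<longleftrightarrow> n \<le> v x"
  by (simp add: val_ge_def)

lemma val_tendsto_if_val_ge_index:
  assumes "\<And>m. val_ge v (int m) (X m - l)"
  shows "val_tendsto v X l"
  unfolding val_tendsto_def eventually_sequentially
proof
  fix n :: int
  show "\<exists>N. \<forall>m\<ge>N. val_ge v n (X m - l)"
    by (rule exI[of _ "nat n"]) (auto intro: val_ge_mono[OF _ assms])
qed

locale valued_field =
  fixes v :: "'a::field \<Rightarrow> int"
  assumes valuation: "discrete_valuation v"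
begin

lemma val_mult: "x \<noteq> 0 \<Longrightarrow> y \<noteq> 0 \<Longrightarrow> v (x * y) = v x + v y"
  using valuation unfolding discrete_valuation_def by blast

lemma val_ultrametric: "x \<noteq> 0 \<Longrightarrow> y \<noteq> 0 \<Longrightarrow> x + y \<noteq> 0 \<Longrightarrow> min (v x) (v y) \<le> v (x + y)"
  using valuation unfolding discrete_valuation_def by blast

lemma val_surj: "\<exists>x. x \<noteq> 0 \<and> v x = n"
  using valuation unfolding discrete_valuation_def by blast

lemma val_one [simp]: "v 1 = 0"
  using val_mult[of 1 1] by simp

lemma val_inverse: "x \<noteq> 0 \<Longrightarrow> v (inverse x) = - v x"
  using val_mult[of x "inverse x"] by simp

lemma val_divide: "x \<noteq> 0 \<Longrightarrow> y \<noteq> 0 \<Longrightarrow> v (x / y) = v x - v y"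
  by (simp add: divide_inverse val_mult val_inverse)

lemma val_uminus [simp]: "v (- x) = v x"
proof (cases "x = 0")
  case False
  have "v (-1) = 0" using val_mult[of "-1" "-1"] by simp
  then show ?thesis using False val_mult[of "-1" x] by simp
qed simp

lemma val_power: "x \<noteq> 0 \<Longrightarrow> v (x ^ k) = int k * v x"
  by (induction k) (simp_all add: val_mult algebra_simps)

lemma val_prod: "finite J \<Longrightarrow> (\<And>j. j \<in> J \<Longrightarrow> f j \<noteq> 0) \<Longrightarrow> v (prod f J) = (\<Sum>j\<in>J. v (f j))"
  by (induction J rule: finite_induct) (simp_all add: val_mult)

lemma val_ge_add: "val_ge v n x \<Longrightarrow> val_ge v n y \<Longrightarrow> val_ge v n (x + y)"
  unfolding val_ge_def by (metis add.commute add_0 val_ultrametric min.bounded_iff order.trans)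

lemma val_ge_uminus [simp]: "val_ge v n (- x) = val_ge v n x"
  by (simp add: val_ge_def)

lemma val_ge_diff: "val_ge v n x \<Longrightarrow> val_ge v n y \<Longrightarrow> val_ge v n (x - y)"
  using val_ge_add[of n x "-y"] by simp

lemma val_ge_minus_commute: "val_ge v n (x - y) = val_ge v n (y - x)"
  using val_ge_uminus[of n "x - y"] by simp

lemma val_ge_mult: "val_ge v a x \<Longrightarrow> val_ge v b y \<Longrightarrow> val_ge v (a + b) (x * y)"
  unfolding val_ge_def by (cases "x = 0"; cases "y = 0") (auto simp: val_mult)

lemma val_ge_sum: "(\<And>j. j \<in> J \<Longrightarrow> val_ge v n (f j)) \<Longrightarrow> val_ge v n (sum f J)"
proof (induction J rule: infinite_finite_induct)
  case (insert x F) then show ?case by (simp add: val_ge_add)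
qed simp_all

lemma val_ge_power: "val_ge v a x \<Longrightarrow> val_ge v (int k * a) (x ^ k)"
proof (induction k)
  case (Suc k)
  then have "val_ge v (a + int k * a) (x * x ^ k)" using val_ge_mult by blast
  then show ?case by (simp add: algebra_simps)
qed (simp add: val_ge_def)

lemma val_ge_of_nat: "val_ge v 0 (of_nat n)"
proof (induction n)
  case (Suc n)
  have "val_ge v 0 (1::'a)" by (simp add: val_ge_def)
  then show ?case using val_ge_add[OF _ Suc.IH] by simp
qed simp

lemma eq_0_if_val_ge_all: "(\<And>n. val_ge v n x) \<Longrightarrow> x = 0"
  using val_ge_nonzero_iff[of x v "v x + 1"] by auto

lemma val_add_eq_left:
  assumes "x \<noteq> 0" "val_ge v (v x + 1) y"
  shows "x + y \<noteq> 0" "v (x + y) = v x"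
proof -
  show "x + y \<noteq> 0"
  proof
    assume "x + y = 0"
    then have "y = - x" by (simp add: eq_neg_iff_add_eq_0 add.commute)
    then show False using assms by (simp add: val_ge_def)
  qed
  moreover have "v (x + y) \<ge> v x"
    using assms \<open>x + y \<noteq> 0\<close> val_ultrametric[of x y] by (cases "y = 0") (auto simp: val_ge_def)
  moreover have "\<not> v (x + y) > v x"
  proof
    assume "v (x + y) > v x"
    then have "val_ge v (v x + 1) ((x + y) - y)"
      using assms \<open>x + y \<noteq> 0\<close> by (intro val_ge_diff) (auto simp: val_ge_def)
    then show False using assms by (simp add: val_ge_def)
  qed
  ultimately show "v (x + y) = v x" by simp
qed

lemma terms_eq_0_if_val_residues_distinct:
  assumes residues: "\<And>j. j < n \<Longrightarrow> f j \<noteq> 0 \<Longrightarrow> v (f j) mod int n = int j"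
    and sum: "(\<Sum>j<n. f j) = 0"
  shows "\<forall>j<n. f j = 0"
proof (rule ccontr)
  define J where "J = {j. j < n \<and> f j \<noteq> 0}"
  assume "\<not> (\<forall>j<n. f j = 0)"
  then have J: "finite J" "J \<noteq> {}" unfolding J_def by auto
  have "Min ((\<lambda>j. v (f j)) ` J) \<in> (\<lambda>j. v (f j)) ` J" using J by simp
  then obtain j0 where j0: "j0 \<in> J" "v (f j0) = Min ((\<lambda>j. v (f j)) ` J)" by force
  have others: "val_ge v (v (f j0) + 1) (f j)" if "j < n" "j \<noteq> j0" for j
  proof (cases "f j = 0")
    case False
    then have "j \<in> J" using that unfolding J_def by simp
    then have "v (f j0) \<le> v (f j)" using j0(2) J(1) by simp
    moreover have "v (f j) \<noteq> v (f j0)"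
      using residues[of j] residues[of j0] j0(1) \<open>j \<in> J\<close> that unfolding J_def by auto
    ultimately show ?thesis using False by (simp add: val_ge_def)
  qed simp
  have "(\<Sum>j<n. f j) = f j0 + (\<Sum>j\<in>{..<n} - {j0}. f j)"
    using j0(1) unfolding J_def by (simp add: sum.remove)
  moreover have "val_ge v (v (f j0) + 1) (\<Sum>j\<in>{..<n} - {j0}. f j)"
    using others by (intro val_ge_sum) simp
  moreover have "f j0 \<noteq> 0" using j0(1) unfolding J_def by simp
  ultimately show False using val_add_eq_left(1) sum by simp
qed

lemma val_ge_0_if_principal: "val_ge v 1 (x - 1) \<Longrightarrow> val_ge v 0 x"
proof -
  assume "val_ge v 1 (x - 1)"
  then have "val_ge v 0 (1 + (x - 1))"
    by (intro val_ge_add) (auto simp: val_ge_def)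
  then show ?thesis by simp
qed

lemma principal_unit_power: "val_ge v 1 (r - 1) \<Longrightarrow> val_ge v 1 (r ^ k - 1)"
proof (induction k)
  case (Suc k)
  have "val_ge v (0 + 1) (r * (r ^ k - 1))"
    using val_ge_mult[OF val_ge_0_if_principal Suc.IH] Suc.prems by simp
  then have "val_ge v 1 (r * (r ^ k - 1) + (r - 1))" using val_ge_add Suc.prems by simp
  then show ?case by (simp add: algebra_simps)
qed simp

lemma principal_unit_prod:
  "(\<And>j. j \<in> J \<Longrightarrow> val_ge v 1 (t j)) \<Longrightarrow> val_ge v 1 ((\<Prod>j\<in>J. 1 + t j) - 1)"
proof (induction J rule: infinite_finite_induct)
  case (insert x F)
  let ?P = "\<Prod>j\<in>F. 1 + t j"
  have IH: "val_ge v 1 (?P - 1)" using insert by simp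
  have "val_ge v (1 + 0) (t x * ?P)"
    using val_ge_mult[OF insert.prems[of x] val_ge_0_if_principal[OF IH]] by simp
  then have "val_ge v 1 (t x * ?P + (?P - 1))" using val_ge_add[OF _ IH] by simp
  then show ?case using insert by (simp add: algebra_simps)
qed simp_all

lemma val_tendsto_unique:
  assumes "val_tendsto v X l" "val_tendsto v X l'"
  shows "l = l'"
proof -
  have "l' - l = 0"
  proof (rule eq_0_if_val_ge_all)
  fix n
  obtain N1 N2 where "\<forall>m\<ge>N1. val_ge v n (X m - l)" "\<forall>m\<ge>N2. val_ge v n (X m - l')"
    using assms unfolding val_tendsto_def eventually_sequentially by meson
  then have "val_ge v n (X (max N1 N2) - l)" "val_ge v n (X (max N1 N2) - l')" by simp_all
  then show "val_ge v n (l' - l)" using val_ge_diff by fastforce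
  qed
  then show ?thesis by simp
qed

end

locale complete_valued_field = valued_field +
  assumes complete: "complete_wrt v"
begin

lemma cauchy_imp_val_tendsto:
  assumes "\<And>n. \<exists>N. \<forall>m\<ge>N. \<forall>k\<ge>N. val_ge v n (X m - X k)"
  shows "\<exists>l. val_tendsto v X l"
proof -
  have "\<forall>n::int. \<exists>N. \<forall>m\<ge>N. \<forall>k\<ge>N. X m = X k \<or> n \<le> v (X m - X k)"
    using assms unfolding val_ge_def by simp
  then obtain l where "\<forall>n::int. \<exists>N. \<forall>m\<ge>N. X m = l \<or> n \<le> v (X m - l)"
    using complete unfolding complete_wrt_def by blast
  then show ?thesis
    unfolding val_tendsto_def val_ge_def eventually_sequentially by auto
qed

lemma val_tendsto_if_successive:
  assumes "\<And>m. val_ge v (int m) (X (Suc m) - X m)"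
  shows "\<exists>l. val_tendsto v X l"
proof (rule cauchy_imp_val_tendsto)
  have tail: "val_ge v (int k) (X m - X k)" if "k \<le> m" for k m
    using that
  proof (induction m)
    case (Suc m)
    show ?case
    proof (cases "k = Suc m")
      case False
      then have "k \<le> m" using Suc.prems by simp
      then have "val_ge v (int k) (X (Suc m) - X m)" using val_ge_mono[OF _ assms[of m]] by simp
      from val_ge_add[OF this Suc.IH[OF \<open>k \<le> m\<close>]] show ?thesis by simp
    qed simp
  qed simp
  fix n
  show "\<exists>N. \<forall>m\<ge>N. \<forall>k\<ge>N. val_ge v n (X m - X k)"
  proof (intro exI[of _ "nat n"] allI impI)
    fix m k assume "nat n \<le> m" "nat n \<le> k"
    then have n: "n \<le> int m" "n \<le> int k" by linarith+
    show "val_ge v n (X m - X k)"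
    proof (cases "k \<le> m")
      case True
      then show ?thesis using tail[of k m] n val_ge_mono by blast
    next
      case False
      then have "val_ge v n (X k - X m)" using tail[of m k] n val_ge_mono by simp
      then show ?thesis using val_ge_minus_commute by blast
    qed
  qed
qed

end

section \<open>Hensel's lemma for \<open>p\<close>-th roots\<close>

context valued_field
begin

lemma binomial_second_order:
  assumes "val_ge v 0 r" "val_ge v 0 h"
  shows "\<exists>E. val_ge v 0 E \<and> (r + h) ^ Suc k = r ^ Suc k + of_nat (Suc k) * r ^ k * h + h\<^sup>2 * E"
proof (induction k)
  case 0 then show ?case by (intro exI[of _ 0]) simp
next
  case (Suc k)
  then obtain E where E: "val_ge v 0 E"
    "(r + h) ^ Suc k = r ^ Suc k + of_nat (Suc k) * r ^ k * h + h\<^sup>2 * E"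
    by blast
  define E' where "E' = r * E + of_nat (Suc k) * r ^ k + h * E"
  have "val_ge v (0 + 0) (r * E)" "val_ge v (0 + 0) (of_nat (Suc k) * r ^ k)" "val_ge v (0 + 0) (h * E)"
    using val_ge_mult[OF assms(1) E(1)] val_ge_mult[OF assms(2) E(1)]
      val_ge_mult[OF val_ge_of_nat[of "Suc k"] val_ge_power[OF assms(1), of k]] by simp_all
  then have "val_ge v 0 E'" unfolding E'_def by (intro val_ge_add) simp_all
  moreover have "(r + h) ^ Suc (Suc k) = r ^ Suc (Suc k) + of_nat (Suc (Suc k)) * r ^ Suc k * h + h\<^sup>2 * E'"
    unfolding E'_def using E(2) by (simp add: algebra_simps power2_eq_square)
  ultimately show ?case by blast
qed


lemma residue_char_neq_unit:
  assumes "residue_char_neq v p"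
  shows "(of_nat p :: 'a) \<noteq> 0" "v (of_nat p) = 0"
proof -
  show "(of_nat p :: 'a) \<noteq> 0"
    using assms unfolding residue_char_neq_def max_ideal_def by auto
  with val_ge_of_nat[of p] have "0 \<le> v (of_nat p)" by (simp add: val_ge_def)
  then show "v (of_nat p) = 0"
    using assms unfolding residue_char_neq_def max_ideal_def by auto
qed

text \<open>One Newton step for \<open>X\<^sup>p - d\<close>, with the derivative \<open>p r\<^sup>p\<^sup>-\<^sup>1\<close> replaced by \<open>p\<close>:
  this is enough since \<open>r\<close> is a principal unit and \<open>p\<close> is a unit.\<close>
lemma pth_root_newton_step:
  assumes p: "residue_char_neq v p" "p > 0"
    and r: "val_ge v 1 (r - 1)" and rN: "val_ge v N (r ^ p - d)" and N: "N \<ge> 1"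
  defines "r' \<equiv> r + (d - r ^ p) / of_nat p"
  shows "val_ge v 1 (r' - 1)" "val_ge v (N + 1) (r' ^ p - d)" "val_ge v N (r' - r)"
proof -
  obtain k where pk: "p = Suc k" using p(2) by (cases p) auto
  define h where "h = (d - r ^ p) / of_nat p"
  have p0: "(of_nat p :: 'a) \<noteq> 0" and vp: "v (of_nat p) = 0" using residue_char_neq_unit[OF p(1)] by auto
  have "val_ge v N (d - r ^ p)" using rN val_ge_minus_commute by blast
  then have hN: "val_ge v N h"
    unfolding h_def using p0 vp by (cases "d = r ^ p") (auto simp: val_ge_def val_divide)
  have h1: "val_ge v 1 h" using val_ge_mono[OF N hN] .
  obtain E where E: "val_ge v 0 E" "(r + h) ^ Suc k = r ^ Suc k + of_nat (Suc k) * r ^ k * h + h\<^sup>2 * E"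
    using binomial_second_order[OF val_ge_0_if_principal[OF r] val_ge_mono[OF _ h1]] by auto
  have ph: "of_nat (Suc k) * h = d - r ^ Suc k" unfolding h_def using p0 pk by simp
  have r': "r' = r + h" unfolding r'_def h_def ..
  have "r' ^ p = r ^ Suc k + r ^ k * (of_nat (Suc k) * h) + h\<^sup>2 * E"
    unfolding r' pk E(2) by (simp only: mult_ac)
  also have "\<dots> = r ^ Suc k + r ^ k * (d - r ^ Suc k) + h\<^sup>2 * E" by (simp only: ph)
  finally have "r' ^ p - d = (r ^ p - d) * (1 - r ^ k) + h\<^sup>2 * E"
    unfolding pk by (simp add: algebra_simps)
  moreover have "val_ge v (N + 1) ((r ^ p - d) * (1 - r ^ k))"
    using val_ge_mult[OF rN] principal_unit_power[OF r, of k] val_ge_minus_commute by blast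
  moreover have "val_ge v (N + 1) (h\<^sup>2 * E)"
    using val_ge_mult[OF val_ge_power[OF hN, of 2] E(1)] by (rule val_ge_mono[rotated]) (use N in simp)
  ultimately show "val_ge v (N + 1) (r' ^ p - d)" using val_ge_add by simp
  show "val_ge v 1 (r' - 1)" using val_ge_add[OF r h1] unfolding r' by (simp add: algebra_simps)
  show "val_ge v N (r' - r)" using hN unfolding r' by simp
qed

lemma val_tendsto_power:
  assumes X: "val_tendsto v X l" and int: "\<And>m. val_ge v 0 (X m)"
  shows "val_tendsto v (\<lambda>m. X m ^ k) (l ^ k)"
  unfolding val_tendsto_def
proof
  fix n
  have "\<forall>\<^sub>F m in sequentially. val_ge v (\<bar>n\<bar> + 1) (X m - l)" using X unfolding val_tendsto_def by blast
  then show "\<forall>\<^sub>F m in sequentially. val_ge v n (X m ^ k - l ^ k)"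
  proof (rule eventually_mono)
    fix m assume close: "val_ge v (\<bar>n\<bar> + 1) (X m - l)"
    have "val_ge v 0 (X m - l)" using close by (rule val_ge_mono[rotated]) simp
    then have "val_ge v 0 (l - X m)" using val_ge_minus_commute by blast
    then have l0: "val_ge v 0 l" using val_ge_add[OF int[of m]] by fastforce
    have "val_ge v 0 (\<Sum>j<k. l ^ (k - Suc j) * X m ^ j)"
      using val_ge_mult[OF val_ge_power[OF l0] val_ge_power[OF int[of m]]] by (intro val_ge_sum) simp
    from val_ge_mult[OF close this]
    have "val_ge v (\<bar>n\<bar> + 1) (X m ^ k - l ^ k)" by (simp add: power_diff_sumr2)
    then show "val_ge v n (X m ^ k - l ^ k)" by (rule val_ge_mono[rotated]) simp
  qed
qed

end

lemma (in complete_valued_field) pth_root_of_principal_unit: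
  assumes p: "residue_char_neq v p" "p > 0" and d: "val_ge v 1 (d - 1)"
  shows "\<exists>r. r ^ p = d"
proof -
  define R where "R m = ((\<lambda>r. r + (d - r ^ p) / of_nat p) ^^ m) 1" for m
  have R: "val_ge v 1 (R m - 1) \<and> val_ge v (int m + 1) (R m ^ p - d)" for m
  proof (induction m)
    case 0 then show ?case using d val_ge_minus_commute by (simp add: R_def)
  next
    case (Suc m)
    then show ?case using pth_root_newton_step[OF p, of "R m" "int m + 1" d] by (simp add: R_def add.commute)
  qed
  have "val_ge v (int m + 1) (R (Suc m) - R m)" for m
    using pth_root_newton_step(3)[OF p, of "R m" "int m + 1" d] R[of m] by (simp add: R_def)
  then have "val_ge v (int m) (R (Suc m) - R m)" for m by (rule val_ge_mono[rotated]) simp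
  then obtain l where l: "val_tendsto v R l" using val_tendsto_if_successive by blast
  have "val_tendsto v (\<lambda>m. R m ^ p) (l ^ p)"
    using val_tendsto_power[OF l] R val_ge_0_if_principal by blast
  moreover have "val_tendsto v (\<lambda>m. R m ^ p) d"
  proof (rule val_tendsto_if_val_ge_index)
    fix m show "val_ge v (int m) (R m ^ p - d)" using conjunct2[OF R[of m]] by (rule val_ge_mono[rotated]) simp
  qed
  ultimately show ?thesis using val_tendsto_unique by blast
qed

section \<open>Uniqueness of extended valuations\<close>

lemma field_hom_if_field_emb:
  assumes "field_emb i"
  shows "field_hom i"
proof -
  have add: "i (x + y) = i x + i y" and mult: "i (x * y) = i x * i y" and one: "i 1 = 1" for x y
    using assms unfolding field_emb_def by blast+
  have "i 0 + i 0 = i 0 + 0" using add[of 0 0] by simp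
  then have "i 0 = 0" by (rule add_left_imp_eq)
  then show ?thesis by unfold_locales (simp_all add: add mult one)
qed

definition lin_indep_over :: "('a::field \<Rightarrow> 'b::field) \<Rightarrow> (nat \<Rightarrow> 'b) \<Rightarrow> nat set \<Rightarrow> bool" where
  "lin_indep_over i b I \<longleftrightarrow> (\<forall>d. (\<Sum>k\<in>I. i (d k) * b k) = 0 \<longrightarrow> (\<forall>k\<in>I. d k = 0))"

context field_hom
begin

lemma lin_indep_over_subset:
  assumes "lin_indep_over hom b I" "J \<subseteq> I" "finite I"
  shows "lin_indep_over hom b J"
  unfolding lin_indep_over_def
proof (intro allI impI ballI)
  fix d k assume d: "(\<Sum>k\<in>J. hom (d k) * b k) = 0" and k: "k \<in> J"
  let ?d = "\<lambda>k. if k \<in> J then d k else 0"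
  have "(\<Sum>k\<in>I. hom (?d k) * b k) = (\<Sum>k\<in>J. hom (d k) * b k)"
    using assms by (auto simp: if_distrib[of hom] intro!: sum.mono_neutral_cong_right)
  moreover have "(\<Sum>k\<in>I. hom (?d k) * b k) = 0 \<longrightarrow> (\<forall>k\<in>I. ?d k = 0)"
    using assms(1) unfolding lin_indep_over_def by (rule spec)
  ultimately have "\<forall>k\<in>I. ?d k = 0" using d by simp
  moreover have "k \<in> I" using k assms(2) by blast
  ultimately show "d k = 0" using k by fastforce
qed

lemma ext_degree_eq_basis:
  assumes "ext_degree_eq hom n"
  obtains b where "lin_indep_over hom b {..<n}" "\<And>y. \<exists>c. y = (\<Sum>k<n. hom (c k) * b k)"
proof -
  obtain b where b: "\<And>y. \<exists>!c. (\<forall>k\<ge>n. c k = 0) \<and> y = (\<Sum>k<n. hom (c k) * b k)"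
    using assms unfolding ext_degree_eq_def by blast
  have "lin_indep_over hom b {..<n}" unfolding lin_indep_over_def
  proof (intro allI impI ballI)
    fix d k assume d: "(\<Sum>k\<in>{..<n}. hom (d k) * b k) = 0" and k: "k \<in> {..<n}"
    have "(\<lambda>k. if k < n then d k else 0) = (\<lambda>k. 0)"
    proof (rule Uniq_D)
      show "\<exists>\<^sub>\<le>\<^sub>1c. (\<forall>k\<ge>n. c k = 0) \<and> 0 = (\<Sum>k<n. hom (c k) * b k)"
        using b[of 0] unfolding ex1_iff_ex_Uniq by blast
    qed (use d in simp_all)
    from fun_cong[OF this, of k] show "d k = 0" using k by simp
  qed
  moreover have "\<exists>c. y = (\<Sum>k<n. hom (c k) * b k)" for y using b[of y] by blast
  ultimately show ?thesis using that by blast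
qed

end

locale valued_extension =
  F: complete_valued_field v + L: valued_field w + field_hom i
  for v :: "'a::field \<Rightarrow> int" and w :: "'b::field \<Rightarrow> int" and i :: "'a \<Rightarrow> 'b" +
  fixes e :: int
  assumes ramification_pos: "e > 0"
    and val_emb: "a \<noteq> 0 \<Longrightarrow> w (i a) = e * v a"
begin

lemma val_ge_emb: "val_ge v n a \<Longrightarrow> val_ge w (e * n) (i a)"
  unfolding val_ge_def using ramification_pos by (cases "a = 0") (auto simp: val_emb)

lemma valued_extension_if_extends:
  assumes "discrete_valuation w'" "\<And>a. a \<noteq> 0 \<Longrightarrow> w' (i a) = e * v a"
  shows "valued_extension v w' i e"
proof intro_locales
  show "valued_field w'" using assms(1) by (rule valued_field.intro)
  show "valued_extension_axioms v w' i e" using assms(2) ramification_pos by unfold_locales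
qed

lemma combination_val_ge:
  assumes "finite I"
  shows "\<exists>C. \<forall>d n. (\<forall>k\<in>I. val_ge v n (d k)) \<longrightarrow> val_ge w (e * n - C) (\<Sum>k\<in>I. i (d k) * b k)"
proof (intro exI allI impI)
  define C where "C = (\<Sum>k\<in>I. \<bar>w (b k)\<bar>)"
  fix d n assume d: "\<forall>k\<in>I. val_ge v n (d k)"
  show "val_ge w (e * n - C) (\<Sum>k\<in>I. i (d k) * b k)"
  proof (rule L.val_ge_sum)
    fix k assume k: "k \<in> I"
    have "\<bar>w (b k)\<bar> \<le> C" unfolding C_def using assms k by (intro member_le_sum) auto
    moreover have "val_ge w (e * n + w (b k)) (i (d k) * b k)"
      using L.val_ge_mult[OF val_ge_emb[OF d[rule_format, OF k]] val_ge_self] .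
    ultimately show "val_ge w (e * n - C) (i (d k) * b k)"
      by (elim val_ge_mono[rotated]) simp
  qed
qed

lemma combination_tendsto:
  assumes "finite I" and l: "\<And>k. k \<in> I \<Longrightarrow> val_tendsto v (\<lambda>m. d m k) (l k)"
  shows "val_tendsto w (\<lambda>m. \<Sum>k\<in>I. i (d m k) * b k) (\<Sum>k\<in>I. i (l k) * b k)"
  unfolding val_tendsto_def
proof
  fix n
  obtain C where C: "\<And>d n. \<forall>k\<in>I. val_ge v n (d k) \<Longrightarrow> val_ge w (e * n - C) (\<Sum>k\<in>I. i (d k) * b k)"
    using combination_val_ge[OF assms(1)] by blast
  define n' where "n' = \<bar>n\<bar> + \<bar>C\<bar>"
  have "1 * n' \<le> e * n'" using ramification_pos unfolding n'_def by (intro mult_right_mono) auto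
  then have n: "n \<le> e * n' - C" using n'_def abs_ge_self[of n] abs_ge_self[of C] by linarith
  have "\<forall>\<^sub>F m in sequentially. \<forall>k\<in>I. val_ge v n' (d m k - l k)"
    using assms by (intro eventually_ball_finite) (auto simp: val_tendsto_def)
  then show "\<forall>\<^sub>F m in sequentially. val_ge w n ((\<Sum>k\<in>I. i (d m k) * b k) - (\<Sum>k\<in>I. i (l k) * b k))"
  proof (rule eventually_mono)
    fix m assume "\<forall>k\<in>I. val_ge v n' (d m k - l k)"
    then have "val_ge w (e * n' - C) (\<Sum>k\<in>I. i (d m k - l k) * b k)" by (rule C)
    moreover have "(\<Sum>k\<in>I. i (d m k - l k) * b k) = (\<Sum>k\<in>I. i (d m k) * b k) - (\<Sum>k\<in>I. i (l k) * b k)"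
      by (simp add: hom_distribs algebra_simps sum_subtractf)
    ultimately show "val_ge w n ((\<Sum>k\<in>I. i (d m k) * b k) - (\<Sum>k\<in>I. i (l k) * b k))"
      using val_ge_mono[OF n] by simp
  qed
qed

text \<open>The analytic core of the uniqueness of extended valuations: on a finite-dimensional
  \<open>F\<close>-space every coordinate with respect to a basis is controlled by the valuation of the vector.\<close>
definition coeff_bound :: "(nat \<Rightarrow> 'b) \<Rightarrow> nat set \<Rightarrow> nat \<Rightarrow> int \<Rightarrow> bool" where
  "coeff_bound b I s C \<longleftrightarrow>
     (\<forall>d n. val_ge w n (\<Sum>k\<in>I. i (d k) * b k) \<longrightarrow> val_ge v ((n - C) div e) (d s))"

lemma coeff_bound_mono:
  assumes "coeff_bound b I s C" "C \<le> C'"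
  shows "coeff_bound b I s C'"
  unfolding coeff_bound_def
proof (intro allI impI)
  fix d n assume "val_ge w n (\<Sum>k\<in>I. i (d k) * b k)"
  then have "val_ge v ((n - C) div e) (d s)" using assms(1) unfolding coeff_bound_def by blast
  moreover have "(n - C') div e \<le> (n - C) div e" using assms(2) ramification_pos by (intro zdiv_mono1) auto
  ultimately show "val_ge v ((n - C') div e) (d s)" using val_ge_mono by blast
qed

lemma ex_uniform_coeff_bound:
  assumes "finite J" "\<And>s. s \<in> J \<Longrightarrow> \<exists>C. coeff_bound b I s C"
  shows "\<exists>C. \<forall>s\<in>J. coeff_bound b I s C"
  using assms
proof (induction J rule: finite_induct)
  case (insert s J)
  then obtain C1 C2 where C1: "\<forall>t\<in>J. coeff_bound b I t C1" and C2: "coeff_bound b I s C2" by blast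
  have "coeff_bound b I t (max C1 C2)" if "t \<in> insert s J" for t
  proof (cases "t = s")
    case True then show ?thesis using coeff_bound_mono[OF C2] by simp
  next
    case False then show ?thesis using coeff_bound_mono[of b I t C1] C1 that by simp
  qed
  then show ?case by blast
qed simp

lemma coefficients_tendsto:
  assumes bound: "\<forall>t\<in>J. coeff_bound b J t C"
    and cauchy: "\<And>m k. val_ge w (int (min m k)) ((\<Sum>j\<in>J. i (d m j) * b j) - (\<Sum>j\<in>J. i (d k j) * b j))"
  shows "\<exists>l. \<forall>t\<in>J. val_tendsto v (\<lambda>m. d m t) (l t)"
proof -
  have "\<exists>l. val_tendsto v (\<lambda>m. d m t) l" if t: "t \<in> J" for t
  proof (rule F.cauchy_imp_val_tendsto)
    fix n
    show "\<exists>N. \<forall>m\<ge>N. \<forall>k\<ge>N. val_ge v n (d m t - d k t)"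
    proof (intro exI[of _ "nat (C + e * \<bar>n\<bar>)"] allI impI)
      fix m k assume "nat (C + e * \<bar>n\<bar>) \<le> m" "nat (C + e * \<bar>n\<bar>) \<le> k"
      moreover have "e * n \<le> e * \<bar>n\<bar>" using ramification_pos by simp
      ultimately have "e * n \<le> int (min m k) - C" by linarith
      then have n: "n \<le> (int (min m k) - C) div e"
        using zdiv_mono1[OF _ ramification_pos] ramification_pos by fastforce
      have diff: "(\<Sum>j\<in>J. i (d m j - d k j) * b j) = (\<Sum>j\<in>J. i (d m j) * b j) - (\<Sum>j\<in>J. i (d k j) * b j)"
        by (simp add: hom_distribs algebra_simps sum_subtractf)
      have "coeff_bound b J t C" using bound t by blast
      from this[unfolded coeff_bound_def, THEN spec[of _ "\<lambda>j. d m j - d k j"], THEN spec[of _ "int (min m k)"]]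
      have "val_ge v ((int (min m k) - C) div e) (d m t - d k t)" using diff cauchy[of m k] by simp
      then show "val_ge v n (d m t - d k t)" using val_ge_mono[OF n] by blast
    qed
  qed
  then have "\<forall>t\<in>J. \<exists>l. val_tendsto v (\<lambda>m. d m t) l" by blast
  then show ?thesis by (rule bchoice)
qed

lemma unit_coefficient_combination_not_tendsto_0:
  assumes I: "finite I" "lin_indep_over i b I" "s \<in> I"
    and bound: "\<forall>t\<in>I - {s}. coeff_bound b (I - {s}) t C"
    and unit: "\<And>m. d m s = 1"
    and small: "\<And>m. val_ge w (int m) (\<Sum>k\<in>I. i (d m k) * b k)"
  shows False
proof -
  define J where "J = I - {s}"
  have split: "(\<Sum>k\<in>I. i (d' k) * b k) = i (d' s) * b s + (\<Sum>k\<in>J. i (d' k) * b k)" for d'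
    unfolding J_def using I by (simp add: sum.remove)
  have "val_ge w (int (min m k)) ((\<Sum>j\<in>J. i (d m j) * b j) - (\<Sum>j\<in>J. i (d k j) * b j))" for m k
  proof -
    have "val_ge w (int (min m k)) ((\<Sum>j\<in>I. i (d m j) * b j) - (\<Sum>j\<in>I. i (d k j) * b j))"
      using val_ge_mono[OF _ small[of m]] val_ge_mono[OF _ small[of k]] by (intro L.val_ge_diff) simp_all
    then show ?thesis unfolding split unit by simp
  qed
  then obtain l where l: "\<forall>t\<in>J. val_tendsto v (\<lambda>m. d m t) (l t)"
    using coefficients_tendsto bound unfolding J_def by blast
  have "val_tendsto w (\<lambda>m. \<Sum>k\<in>J. i (d m k) * b k) (\<Sum>k\<in>J. i (l k) * b k)"
    using I(1) l unfolding J_def by (intro combination_tendsto) auto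
  moreover have "val_tendsto w (\<lambda>m. \<Sum>k\<in>J. i (d m k) * b k) (- b s)"
    using small split unit by (intro val_tendsto_if_val_ge_index) (simp add: add.commute)
  ultimately have z: "(\<Sum>k\<in>J. i (l k) * b k) = - b s" by (rule L.val_tendsto_unique)
  define l' where "l' k = (if k = s then 1 else l k)" for k
  have "(\<Sum>k\<in>J. i (l' k) * b k) = (\<Sum>k\<in>J. i (l k) * b k)" unfolding l'_def J_def by simp
  then have "(\<Sum>k\<in>I. i (l' k) * b k) = 0" using z split[of l'] by (simp add: l'_def)
  then have "l' s = 0" using I unfolding lin_indep_over_def by blast
  then show False by (simp add: l'_def)
qed

lemma coeff_bound_extend:
  assumes I: "finite I" "lin_indep_over i b I" "s \<in> I"
    and bound: "\<forall>t\<in>I - {s}. coeff_bound b (I - {s}) t C"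
  shows "\<exists>C. coeff_bound b I s C"
proof (rule ccontr)
  assume "\<nexists>C. coeff_bound b I s C"
  then have "\<forall>m::nat. \<exists>D N. val_ge w N (\<Sum>k\<in>I. i (D k) * b k) \<and> \<not> val_ge v ((N - int m) div e) (D s)"
    unfolding coeff_bound_def by blast
  from choice[OF this] obtain D where
    "\<forall>m. \<exists>N. val_ge w N (\<Sum>k\<in>I. i (D m k) * b k) \<and> \<not> val_ge v ((N - int m) div e) (D m s)"
    by blast
  from choice[OF this] obtain N where DN: "\<And>m. val_ge w (N m) (\<Sum>k\<in>I. i (D m k) * b k)"
    "\<And>m. \<not> val_ge v ((N m - int m) div e) (D m s)"
    by blast
  have Ds: "D m s \<noteq> 0" for m using DN(2)[of m] by auto
  have "e * v (D m s) < N m - int m" for m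
  proof -
    have "v (D m s) + 1 \<le> (N m - int m) div e" using DN(2)[of m] Ds[of m] by (simp add: val_ge_def)
    then have "e * (v (D m s) + 1) \<le> e * ((N m - int m) div e)" using ramification_pos by simp
    also have "\<dots> \<le> N m - int m"
      using pos_mod_sign[OF ramification_pos, of "N m - int m"] mult_div_mod_eq[of e "N m - int m"] by linarith
    finally show ?thesis using ramification_pos by (simp add: algebra_simps)
  qed
  define d where "d m k = D m k / D m s" for m k
  have combination_d: "(\<Sum>k\<in>I. i (d m k) * b k) = (\<Sum>k\<in>I. i (D m k) * b k) / i (D m s)" for m
    unfolding d_def by (simp add: hom_distribs sum_divide_distrib)
  have "val_ge w (int m) (\<Sum>k\<in>I. i (d m k) * b k)" for m
  proof (cases "(\<Sum>k\<in>I. i (D m k) * b k) = 0")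
    case True
    then show ?thesis by (simp add: combination_d)
  next
    case False
    have "N m \<le> w (\<Sum>k\<in>I. i (D m k) * b k)" using DN(1)[of m] False by (simp add: val_ge_def)
    moreover have "w (\<Sum>k\<in>I. i (d m k) * b k) = w (\<Sum>k\<in>I. i (D m k) * b k) - e * v (D m s)"
      unfolding combination_d using False Ds[of m] by (simp add: L.val_divide val_emb)
    ultimately show ?thesis using \<open>e * v (D m s) < N m - int m\<close> by (simp add: val_ge_def)
  qed
  moreover have "d m s = 1" for m using Ds by (simp add: d_def)
  ultimately show False using unit_coefficient_combination_not_tendsto_0[OF I bound] by blast
qed

lemma coeff_bound_exists:
  assumes "finite I" "lin_indep_over i b I" "s \<in> I"
  shows "\<exists>C. coeff_bound b I s C"
  using assms
proof (induction "card I" arbitrary: I s rule: less_induct)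
  case less
  have smaller: "card (I - {s}) < card I" by (rule card_Diff1_less[OF less.prems(1,3)])
  have indep: "lin_indep_over i b (I - {s})" by (rule lin_indep_over_subset[OF less.prems(2) _ less.prems(1)]) blast
  have "\<exists>C. coeff_bound b (I - {s}) t C" if "t \<in> I - {s}" for t
    using less.hyps[OF smaller _ indep that] less.prems(1) by simp
  then obtain C where "\<forall>t\<in>I - {s}. coeff_bound b (I - {s}) t C"
    using ex_uniform_coeff_bound[of "I - {s}" b "I - {s}"] less.prems(1) by auto
  then show ?case using coeff_bound_extend less.prems by blast
qed

end

lemma val_extension_pos_transfer:
  assumes E1: "valued_extension v w1 i e" and E2: "valued_extension v w2 i e"
    and deg: "ext_degree_eq i n" and x: "x \<noteq> 0" "w1 x > 0"
  shows "w2 x > 0"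
proof -
  interpret E1: valued_extension v w1 i e by (fact E1)
  interpret E2: valued_extension v w2 i e by (fact E2)
  obtain b where indep: "lin_indep_over i b {..<n}" and span: "\<And>y. \<exists>c. y = (\<Sum>k<n. i (c k) * b k)"
    using E1.ext_degree_eq_basis[OF deg] by blast
  obtain C where C: "\<forall>s\<in>{..<n}. E1.coeff_bound b {..<n} s C"
    using E1.ex_uniform_coeff_bound[of "{..<n}"] E1.coeff_bound_exists[OF _ indep] by blast
  obtain C0 where C0: "\<And>d m. \<forall>k\<in>{..<n}. val_ge v m (d k) \<Longrightarrow> val_ge w2 (e * m - C0) (\<Sum>k<n. i (d k) * b k)"
    using E2.combination_val_ge[of "{..<n}" b] by auto
  define M where "M = nat (C + e + \<bar>C0\<bar>) + 1"
  obtain c where c: "x ^ M = (\<Sum>k<n. i (c k) * b k)" using span by blast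
  have "int M * 1 \<le> int M * w1 x" using x(2) by (intro mult_left_mono) auto
  then have "val_ge w1 (int M) (x ^ M)" using x by (simp add: val_ge_def E1.L.val_power)
  then have "val_ge v ((int M - C) div e) (c s)" if "s < n" for s
    using C that \<open>val_ge w1 (int M) (x ^ M)\<close> unfolding E1.coeff_bound_def c by blast
  then have "val_ge w2 (e * ((int M - C) div e) - C0) (x ^ M)" using C0 c by simp
  then have "e * ((int M - C) div e) - C0 \<le> int M * w2 x"
    using x by (simp add: val_ge_def E2.L.val_power)
  moreover have "int M - C - e < e * ((int M - C) div e)"
    using pos_mod_bound[OF E1.ramification_pos, of "int M - C"] mult_div_mod_eq[of e "int M - C"] by linarith
  ultimately have "0 < int M * w2 x" unfolding M_def by linarith
  then show ?thesis by (simp add: zero_less_mult_iff)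
qed

lemma val_extension_unique:
  assumes E1: "valued_extension v w1 i e" and E2: "valued_extension v w2 i e"
    and deg: "ext_degree_eq i n" and x: "x \<noteq> 0"
  shows "w2 x = w1 x"
proof -
  interpret E1: valued_extension v w1 i e by (fact E1)
  interpret E2: valued_extension v w2 i e by (fact E2)
  obtain c where c: "c \<noteq> 0" "v c = w1 x" using E1.F.val_surj by blast
  define z where "z = x ^ nat e / i c"
  have z: "z \<noteq> 0" unfolding z_def using x c by simp
  have wz: "w (z) = e * w x - e * v c" if "valued_extension v w i e" for w
  proof -
    interpret E: valued_extension v w i e by (fact that)
    show ?thesis unfolding z_def using x c E.ramification_pos
      by (simp add: E.L.val_divide E.L.val_power E.val_emb)
  qed
  have w1z: "w1 z = 0" using wz[OF E1] c by simp
  have "w2 z = 0"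
  proof (rule ccontr)
    assume "w2 z \<noteq> 0"
    then consider "w2 z > 0" | "w2 (inverse z) > 0" using E2.L.val_inverse[OF z] by linarith
    then show False
    proof cases
      case 1 then show ?thesis using val_extension_pos_transfer[OF E2 E1 deg z] w1z by simp
    next
      case 2 then show ?thesis
        using val_extension_pos_transfer[OF E2 E1 deg, of "inverse z"] z w1z E1.L.val_inverse[OF z] by simp
    qed
  qed
  then have "e * w2 x = e * w1 x" using wz[OF E2] c by simp
  then show ?thesis using E1.ramification_pos by simp
qed

section \<open>Cyclic extensions\<close>

lemma Gal_fix: "\<tau> \<in> Gal i \<Longrightarrow> \<tau> (i a) = i a"
  unfolding Gal_def by blast

lemma Gal_bij: "\<tau> \<in> Gal i \<Longrightarrow> bij \<tau>"
  unfolding Gal_def by blast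

lemma Gal_add: "\<tau> \<in> Gal i \<Longrightarrow> \<tau> (x + y) = \<tau> x + \<tau> y"
  unfolding Gal_def by blast

lemma Gal_mult: "\<tau> \<in> Gal i \<Longrightarrow> \<tau> (x * y) = \<tau> x * \<tau> y"
  unfolding Gal_def by blast

lemma Gal_id: "id \<in> Gal i"
  unfolding Gal_def by simp

lemma Gal_comp: "\<tau> \<in> Gal i \<Longrightarrow> \<sigma> \<in> Gal i \<Longrightarrow> \<tau> \<circ> \<sigma> \<in> Gal i"
  unfolding Gal_def by (auto intro: bij_comp)

lemma Gal_funpow: "\<sigma> \<in> Gal i \<Longrightarrow> \<sigma> ^^ k \<in> Gal i"
  by (induction k) (simp_all add: Gal_id Gal_comp)

lemma Gal_field_hom:
  assumes "field_emb i" "\<tau> \<in> Gal i"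
  shows "field_hom \<tau>"
proof -
  have add: "\<tau> (x + y) = \<tau> x + \<tau> y" and mult: "\<tau> (x * y) = \<tau> x * \<tau> y" for x y
    using assms(2) unfolding Gal_def by blast+
  have "\<tau> 1 = 1" using Gal_fix[OF assms(2), of 1] assms(1) unfolding field_emb_def by simp
  moreover have "\<tau> 0 + \<tau> 0 = \<tau> 0 + 0" using add[of 0 0] by simp
  then have "\<tau> 0 = 0" by (rule add_left_imp_eq)
  ultimately show ?thesis by unfold_locales (simp_all add: add mult)
qed

lemma funpow_period_if_eq:
  assumes "inj f" "f ^^ a = f ^^ b" "a < b"
  shows "f ^^ (b - a) = id"
proof -
  have "f ^^ a \<circ> f ^^ (b - a) = f ^^ a \<circ> id"
    using assms(2,3) funpow_add[of a "b - a" f] by simp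
  moreover have "inj (f ^^ a)" using assms(1) by (rule inj_fn)
  ultimately show ?thesis by (simp add: fun_eq_iff inj_eq)
qed

locale cyclic_extension =
  fixes i :: "'a::field \<Rightarrow> 'b::field" and n :: nat
  assumes cyclic: "cyclic_ext i n"

sublocale cyclic_extension \<subseteq> field_hom i
  using cyclic field_hom_if_field_emb unfolding cyclic_ext_def by blast

context cyclic_extension
begin

lemma ext_degree: "ext_degree_eq i n"
  using cyclic unfolding cyclic_ext_def by blast

lemma card_Gal: "card (Gal i) = n"
  using cyclic unfolding cyclic_ext_def by blast

lemma degree_pos: "n > 0"
proof (rule ccontr)
  assume "\<not> n > 0"
  obtain b where "\<And>y. \<exists>c. y = (\<Sum>k<n. i (c k) * b k)"
    using ext_degree_eq_basis[OF ext_degree] by blast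
  then obtain c where "1 = (\<Sum>k<n. i (c k) * b k)" by blast
  with \<open>\<not> n > 0\<close> show False by simp
qed

lemma finite_Gal: "finite (Gal i)"
  using card_Gal degree_pos card_ge_0_finite by blast

lemma Gal_hom: "\<tau> \<in> Gal i \<Longrightarrow> field_hom \<tau>"
  using Gal_field_hom cyclic unfolding cyclic_ext_def by blast

lemma Gal_one: "\<tau> \<in> Gal i \<Longrightarrow> \<tau> 1 = 1"
  using Gal_fix[of \<tau> i 1] by simp

lemma Gal_eq_0_iff:
  assumes "\<tau> \<in> Gal i"
  shows "\<tau> x = 0 \<longleftrightarrow> x = 0"
proof -
  interpret \<tau>: field_hom \<tau> using Gal_hom[OF assms] .
  show ?thesis by simp
qed

definition gen :: "'b \<Rightarrow> 'b" where
  "gen = (SOME \<sigma>. \<sigma> \<in> Gal i \<and> Gal i = range (\<lambda>k. \<sigma> ^^ k))"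

lemma gen_in_Gal: "gen \<in> Gal i" and Gal_eq_range_gen: "Gal i = range (\<lambda>k. gen ^^ k)"
proof -
  have "\<exists>\<sigma>. \<sigma> \<in> Gal i \<and> Gal i = range (\<lambda>k. \<sigma> ^^ k)" using cyclic unfolding cyclic_ext_def by blast
  then have "gen \<in> Gal i \<and> Gal i = range (\<lambda>k. gen ^^ k)" unfolding gen_def by (rule someI_ex)
  then show "gen \<in> Gal i" "Gal i = range (\<lambda>k. gen ^^ k)" by auto
qed

lemma gen_power_in_Gal: "gen ^^ k \<in> Gal i"
  using Gal_funpow[OF gen_in_Gal] .

lemma inj_gen: "inj gen"
  using Gal_bij[OF gen_in_Gal] by (rule bij_is_inj)

lemma gen_has_period: "\<exists>d>0. gen ^^ d = id"
proof -
  have "\<not> inj_on (\<lambda>k. gen ^^ k) {..n}"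
  proof
    assume inj: "inj_on (\<lambda>k. gen ^^ k) {..n}"
    have "(\<lambda>k. gen ^^ k) ` {..n} \<subseteq> Gal i" using gen_power_in_Gal by blast
    from card_mono[OF finite_Gal this] have "card ((\<lambda>k. gen ^^ k) ` {..n}) \<le> n" by (simp only: card_Gal)
    moreover have "card ((\<lambda>k. gen ^^ k) ` {..n}) = Suc n" using inj by (simp add: card_image)
    ultimately show False by simp
  qed
  then obtain a b where ab: "a \<noteq> b" "gen ^^ a = gen ^^ b" unfolding inj_on_def by blast
  show ?thesis
  proof (cases "a < b")
    case True
    then show ?thesis using funpow_period_if_eq[OF inj_gen ab(2) True] by (intro exI[of _ "b - a"]) simp
  next
    case False
    then have "b < a" using ab(1) by simp
    then show ?thesis using funpow_period_if_eq[OF inj_gen ab(2)[symmetric]] by (intro exI[of _ "a - b"]) simp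
  qed
qed

lemma gen_order:
  shows gen_power_degree: "gen ^^ n = id"
    and inj_on_gen_powers: "inj_on (\<lambda>k. gen ^^ k) {..<n}"
    and Gal_eq_gen_powers: "Gal i = (\<lambda>k. gen ^^ k) ` {..<n}"
proof -
  define d where "d = (LEAST d. d > 0 \<and> gen ^^ d = id)"
  have d: "d > 0" "gen ^^ d = id" using LeastI_ex[OF gen_has_period] unfolding d_def by auto
  have d_min: "gen ^^ c \<noteq> id" if "0 < c" "c < d" for c
    using not_less_Least[of c "\<lambda>d. d > 0 \<and> gen ^^ d = id"] that unfolding d_def by auto
  have no_collision: "gen ^^ a \<noteq> gen ^^ b" if "a < b" "b < d" for a b
  proof
    assume "gen ^^ a = gen ^^ b"
    then have "gen ^^ (b - a) = id" using funpow_period_if_eq[OF inj_gen _ that(1)] by blast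
    moreover have "0 < b - a" "b - a < d" using that by auto
    ultimately show False using d_min by blast
  qed
  have inj: "inj_on (\<lambda>k. gen ^^ k) {..<d}"
  proof (rule inj_onI)
    fix a b assume "a \<in> {..<d}" "b \<in> {..<d}" "gen ^^ a = gen ^^ b"
    then show "a = b" using no_collision[of a b] no_collision[of b a] by (cases a b rule: linorder_cases) auto
  qed
  have mod: "gen ^^ k = gen ^^ (k mod d)" for k
  proof -
    have "gen ^^ (d * m) = id" for m using d(2) by (induction m) (simp_all add: funpow_add)
    moreover have "gen ^^ k = gen ^^ (k mod d + d * (k div d))" by simp
    ultimately show ?thesis by (simp only: funpow_add) simp
  qed
  have "Gal i = (\<lambda>k. gen ^^ k) ` {..<d}"
    unfolding Gal_eq_range_gen
  proof (intro equalityI subsetI)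
    fix x assume "x \<in> range (\<lambda>k. gen ^^ k)"
    then obtain k where "x = gen ^^ (k mod d)" using mod by blast
    moreover have "k mod d < d" using d(1) by simp
    ultimately show "x \<in> (\<lambda>k. gen ^^ k) ` {..<d}" by blast
  qed blast
  moreover from this have "d = n" using card_Gal card_image[OF inj] by simp
  ultimately show "gen ^^ n = id" "inj_on (\<lambda>k. gen ^^ k) {..<n}" "Gal i = (\<lambda>k. gen ^^ k) ` {..<n}"
    using d inj by simp_all
qed

lemma prod_Gal: "(\<Prod>\<tau>\<in>Gal i. f \<tau>) = (\<Prod>k<n. f (gen ^^ k))"
  unfolding Gal_eq_gen_powers by (simp add: prod.reindex[OF inj_on_gen_powers])

lemma bij_betw_Gal_comp:
  assumes "\<sigma> \<in> Gal i"
  shows "bij_betw ((\<circ>) \<sigma>) (Gal i) (Gal i)" "bij_betw (\<lambda>\<tau>. \<tau> \<circ> \<sigma>) (Gal i) (Gal i)"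
proof -
  have inj: "inj \<sigma>" and surj: "surj \<sigma>" using Gal_bij[OF assms] by (simp_all add: bij_is_inj bij_is_surj)
  have "inj_on ((\<circ>) \<sigma>) (Gal i)"
    using inj by (intro inj_onI) (simp add: fun_eq_iff inj_eq)
  moreover have "((\<circ>) \<sigma>) ` Gal i \<subseteq> Gal i" using Gal_comp[OF assms] by blast
  ultimately show "bij_betw ((\<circ>) \<sigma>) (Gal i) (Gal i)"
    unfolding bij_betw_def using endo_inj_surj[OF finite_Gal] by blast
  have "inj_on (\<lambda>\<tau>. \<tau> \<circ> \<sigma>) (Gal i)"
  proof (rule inj_onI)
    fix a b :: "'b \<Rightarrow> 'b" assume "a \<circ> \<sigma> = b \<circ> \<sigma>"
    then show "a = b" using surj by (simp add: fun_eq_iff) (metis surjD)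
  qed
  moreover have "(\<lambda>\<tau>. \<tau> \<circ> \<sigma>) ` Gal i \<subseteq> Gal i" using Gal_comp[OF _ assms] by blast
  ultimately show "bij_betw (\<lambda>\<tau>. \<tau> \<circ> \<sigma>) (Gal i) (Gal i)"
    unfolding bij_betw_def using endo_inj_surj[OF finite_Gal] by blast
qed

lemma prod_Gal_comp_left: "\<sigma> \<in> Gal i \<Longrightarrow> (\<Prod>\<tau>\<in>Gal i. f (\<sigma> \<circ> \<tau>)) = (\<Prod>\<tau>\<in>Gal i. f \<tau>)"
  using prod.reindex_bij_betw[OF bij_betw_Gal_comp(1)] by blast

lemma prod_Gal_comp_right: "\<sigma> \<in> Gal i \<Longrightarrow> (\<Prod>\<tau>\<in>Gal i. f (\<tau> \<circ> \<sigma>)) = (\<Prod>\<tau>\<in>Gal i. f \<tau>)"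
  using prod.reindex_bij_betw[OF bij_betw_Gal_comp(2)] by blast

end

section \<open>Norms and Hilbert 90\<close>

lemma dedekind_independence:
  fixes \<tau> :: "nat \<Rightarrow> 'b::field \<Rightarrow> 'b"
  assumes "finite J" "inj_on \<tau> J" and mult: "\<And>j x y. \<tau> j (x * y) = \<tau> j x * \<tau> j y"
    and one: "\<And>j. \<tau> j 1 = 1"
  shows "\<forall>l. (\<forall>x. (\<Sum>j\<in>J. l j * \<tau> j x) = 0) \<longrightarrow> (\<forall>j\<in>J. l j = 0)"
  using assms(1,2)
proof (induction J rule: finite_induct)
  case (insert r J)
  show ?case
  proof (intro allI impI)
    fix l assume "\<forall>x. (\<Sum>j\<in>insert r J. l j * \<tau> j x) = 0"
    then have h: "l r * \<tau> r x + (\<Sum>j\<in>J. l j * \<tau> j x) = 0" for x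
      using insert(1,2) by simp
    have injJ: "inj_on \<tau> J" using insert(4) by (rule inj_on_subset) auto
    have shifted: "\<forall>j\<in>J. l j * (\<tau> j y - \<tau> r y) = 0" for y
    proof -
      have "(\<Sum>j\<in>J. (l j * (\<tau> j y - \<tau> r y)) * \<tau> j x) = 0" for x
      proof -
        have "l r * \<tau> r x * \<tau> r y + (\<Sum>j\<in>J. l j * \<tau> j x * \<tau> j y) = 0"
          using h[of "x * y"] by (simp add: mult mult.assoc)
        moreover have "l r * \<tau> r x * \<tau> r y + (\<Sum>j\<in>J. l j * \<tau> j x * \<tau> r y) = 0"
          using arg_cong[OF h[of x], of "\<lambda>z. z * \<tau> r y"] by (simp only: distrib_right sum_distrib_right mult_zero_left)
        ultimately show ?thesis
          by (simp add: algebra_simps sum_subtractf eq_neg_iff_add_eq_0[symmetric])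
      qed
      then show ?thesis using insert.IH[OF injJ, THEN spec[of _ "\<lambda>j. l j * (\<tau> j y - \<tau> r y)"]] by simp
    qed
    have lJ: "\<forall>j\<in>J. l j = 0"
    proof
      fix j assume j: "j \<in> J"
      have "\<tau> j \<noteq> \<tau> r" using insert(2,4) j by (auto simp: inj_on_def)
      then obtain y where "\<tau> j y \<noteq> \<tau> r y" by blast
      then show "l j = 0" using bspec[OF shifted[of y] j] by simp
    qed
    then have "l r = 0" using h[of 1] one by simp
    then show "\<forall>j\<in>insert r J. l j = 0" using lJ by simp
  qed
qed simp

context cyclic_extension
begin

lemma gen_powers_independent:
  assumes "\<And>x. (\<Sum>j<n. l j * (gen ^^ j) x) = 0" "j < n"
  shows "l j = 0"
  using dedekind_independence[of "{..<n}" "\<lambda>j. gen ^^ j", OF _ inj_on_gen_powers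
      Gal_mult[OF gen_power_in_Gal] Gal_one[OF gen_power_in_Gal]] assms
  by blast

lemma Gal_combination:
  assumes "\<sigma> \<in> Gal i"
  shows "\<sigma> (\<Sum>k<n. i (c k) * b k) = (\<Sum>k<n. i (c k) * \<sigma> (b k))"
proof -
  interpret \<sigma>: field_hom \<sigma> using Gal_hom[OF assms] .
  show ?thesis using Gal_fix[OF assms] by (simp add: \<sigma>.hom_sum \<sigma>.hom_mult)
qed

lemma det_conjugates_nonzero:
  assumes span: "\<And>y. \<exists>c. y = (\<Sum>k<n. i (c k) * b k)"
  shows "det (mat n n (\<lambda>(j, k). (gen ^^ j) (b k))) \<noteq> 0"
proof
  define M where "M = mat n n (\<lambda>(j, k). (gen ^^ j) (b k))"
  have M: "M \<in> carrier_mat n n" "transpose_mat M \<in> carrier_mat n n" unfolding M_def by simp_all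
  assume "det (mat n n (\<lambda>(j, k). (gen ^^ j) (b k))) = 0"
  then have "det (transpose_mat M) = 0" using det_transpose[OF M(1)] unfolding M_def by simp
  then obtain l where l: "l \<in> carrier_vec n" "l \<noteq> 0\<^sub>v n" "transpose_mat M *\<^sub>v l = 0\<^sub>v n"
    using det_0_iff_vec_prod_zero_field[OF M(2)] by blast
  have columns: "(\<Sum>j<n. (gen ^^ j) (b k) * l $ j) = 0" if "k < n" for k
  proof -
    have "(transpose_mat M *\<^sub>v l) $ k = (\<Sum>j<n. (gen ^^ j) (b k) * l $ j)"
      using that M l(1) unfolding M_def by (simp add: scalar_prod_def lessThan_atLeast0)
    then show ?thesis using l(3) that by simp
  qed
  have "(\<Sum>j<n. l $ j * (gen ^^ j) x) = 0" for x
  proof -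
    obtain c where c: "x = (\<Sum>k<n. i (c k) * b k)" using span by blast
    have "(\<Sum>j<n. l $ j * (gen ^^ j) x) = (\<Sum>j<n. \<Sum>k<n. l $ j * (i (c k) * (gen ^^ j) (b k)))"
      unfolding c Gal_combination[OF gen_power_in_Gal] by (simp add: sum_distrib_left)
    also have "\<dots> = (\<Sum>k<n. i (c k) * (\<Sum>j<n. (gen ^^ j) (b k) * l $ j))"
      by (subst sum.swap) (simp add: sum_distrib_left algebra_simps)
    also have "\<dots> = 0" using columns by simp
    finally show ?thesis .
  qed
  then have "l $ j = 0" if "j < n" for j using gen_powers_independent that by blast
  then have "l = 0\<^sub>v n" using l(1) by (intro eq_vecI) auto
  then show False using l(2) by simp
qed

lemma fixed_imp_in_range:
  assumes fixed: "\<And>\<tau>. \<tau> \<in> Gal i \<Longrightarrow> \<tau> z = z"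
  shows "\<exists>a. z = i a"
proof -
  obtain b where span: "\<And>y. \<exists>c. y = (\<Sum>k<n. i (c k) * b k)"
    using ext_degree_eq_basis[OF ext_degree] by blast
  define M where "M = mat n n (\<lambda>(j, k). (gen ^^ j) (b k))"
  have M: "M \<in> carrier_mat n n" unfolding M_def by simp
  obtain c where c: "z = (\<Sum>k<n. i (c k) * b k)" using span by blast
  obtain e where e: "1 = (\<Sum>k<n. i (e k) * b k)" using span by blast
  define u where "u = vec n (\<lambda>k. i (c k) - z * i (e k))"
  have "M *\<^sub>v u = 0\<^sub>v n"
  proof (rule eq_vecI)
    fix j assume "j < dim_vec (0\<^sub>v n :: 'b vec)"
    then have j: "j < n" by simp
    have "(M *\<^sub>v u) $ j = (\<Sum>k<n. (gen ^^ j) (b k) * (i (c k) - z * i (e k)))"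
      using j M unfolding M_def u_def by (simp add: scalar_prod_def lessThan_atLeast0)
    also have "\<dots> = (\<Sum>k<n. i (c k) * (gen ^^ j) (b k)) - z * (\<Sum>k<n. i (e k) * (gen ^^ j) (b k))"
      by (simp add: algebra_simps sum_subtractf sum_distrib_left)
    also have "\<dots> = (gen ^^ j) z - z * (gen ^^ j) 1"
      unfolding c e Gal_combination[OF gen_power_in_Gal] ..
    also have "\<dots> = 0" using fixed[OF gen_power_in_Gal] Gal_one[OF gen_power_in_Gal] by simp
    finally show "(M *\<^sub>v u) $ j = 0\<^sub>v n $ j" using j by simp
  qed (simp add: M_def)
  moreover have "u \<in> carrier_vec n" unfolding u_def by simp
  ultimately have "u = 0\<^sub>v n"
    using det_0_iff_vec_prod_zero_field[OF M] det_conjugates_nonzero[OF span] unfolding M_def by blast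
  have ck: "i (c k) = z * i (e k)" if "k < n" for k
  proof -
    have "u $ k = 0" using \<open>u = 0\<^sub>v n\<close> that by simp
    then show ?thesis using that unfolding u_def by simp
  qed
  obtain k where k: "k < n" "e k \<noteq> 0"
  proof (rule ccontr)
    assume "\<not> thesis"
    then have "\<forall>k<n. e k = 0" using that by blast
    then show False using e by simp
  qed
  have "z = i (c k) / i (e k)" using ck[OF k(1)] k(2) by simp
  then show ?thesis by (metis hom_div)
qed

lemma lin_dependent_Suc:
  fixes z :: "nat \<Rightarrow> 'b"
  shows "\<exists>l. (\<exists>j<Suc n. l j \<noteq> 0) \<and> (\<Sum>j<Suc n. i (l j) * z j) = 0"
proof -
  obtain b where span: "\<And>y. \<exists>c. y = (\<Sum>k<n. i (c k) * b k)"
    using ext_degree_eq_basis[OF ext_degree] by blast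
  obtain c where c: "\<And>j. z j = (\<Sum>k<n. i (c j k) * b k)"
    using choice[of "\<lambda>j c. z j = (\<Sum>k<n. i (c k) * b k)"] span by blast
  define A where "A = mat\<^sub>r (Suc n) (Suc n) (\<lambda>k. if k = n then 0\<^sub>v (Suc n) else vec (Suc n) (\<lambda>j. c j k))"
  have A: "A \<in> carrier_mat (Suc n) (Suc n)" unfolding A_def by simp
  have "det A = 0" unfolding A_def by (rule det_row_0) auto
  then obtain u where u: "u \<in> carrier_vec (Suc n)" "u \<noteq> 0\<^sub>v (Suc n)" "A *\<^sub>v u = 0\<^sub>v (Suc n)"
    using det_0_iff_vec_prod_zero_field[OF A] by blast
  have rows: "(\<Sum>j<Suc n. c j k * u $ j) = 0" if k: "k < n" for k
  proof -
    have "(A *\<^sub>v u) $ k = (\<Sum>j<Suc n. c j k * u $ j)"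
      using k u(1) unfolding A_def by (simp add: scalar_prod_def lessThan_atLeast0)
    then show ?thesis using u(3) k by simp
  qed
  have "(\<Sum>j<Suc n. i (u $ j) * z j) = (\<Sum>j<Suc n. \<Sum>k<n. i (u $ j) * (i (c j k) * b k))"
    by (simp only: c sum_distrib_left)
  also have "\<dots> = (\<Sum>k<n. i (\<Sum>j<Suc n. c j k * u $ j) * b k)"
    by (subst sum.swap) (simp add: hom_distribs sum_distrib_right mult_ac del: sum.lessThan_Suc)
  also have "\<dots> = 0" using rows by simp
  finally have "(\<Sum>j<Suc n. i (u $ j) * z j) = 0" .
  moreover have "\<exists>j<Suc n. u $ j \<noteq> 0"
  proof (rule ccontr)
    assume "\<not> (\<exists>j<Suc n. u $ j \<noteq> 0)"
    then have "u = 0\<^sub>v (Suc n)" using u(1) by (intro eq_vecI) auto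
    then show False using u(2) by simp
  qed
  ultimately show ?thesis by blast
qed

lemma lin_dependent_powers:
  obtains l where "\<exists>j<Suc n. l j \<noteq> 0" "(\<Sum>j<n. i (l j) * P ^ j) + i (l n) * y = 0"
proof -
  define z where "z j = (if j < n then P ^ j else y)" for j
  obtain l where l: "\<exists>j<Suc n. l j \<noteq> 0" "(\<Sum>j<Suc n. i (l j) * z j) = 0"
    using lin_dependent_Suc[of z] by blast
  have "(\<Sum>j<n. i (l j) * z j) = (\<Sum>j<n. i (l j) * P ^ j)"
    by (rule sum.cong) (simp_all add: z_def)
  then have "(\<Sum>j<n. i (l j) * P ^ j) + i (l n) * y = 0" using l(2) by (simp add: z_def)
  then show ?thesis using that l(1) by blast
qed

definition gal_norm :: "'b \<Rightarrow> 'b" where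
  "gal_norm x = (\<Prod>\<tau>\<in>Gal i. \<tau> x)"

lemma gal_norm_in_range: "\<exists>a. gal_norm x = i a"
proof (rule fixed_imp_in_range)
  fix \<sigma> assume \<sigma>: "\<sigma> \<in> Gal i"
  interpret \<sigma>: field_hom \<sigma> using Gal_hom[OF \<sigma>] .
  have "\<sigma> (gal_norm x) = (\<Prod>\<tau>\<in>Gal i. (\<sigma> \<circ> \<tau>) x)"
    unfolding gal_norm_def by (simp add: \<sigma>.hom_prod)
  also have "\<dots> = gal_norm x" unfolding gal_norm_def by (rule prod_Gal_comp_left[OF \<sigma>])
  finally show "\<sigma> (gal_norm x) = gal_norm x" .
qed

lemma emb_ext_norm: "i (ext_norm i x) = gal_norm x"
proof -
  obtain a where a: "gal_norm x = i a" using gal_norm_in_range by blast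
  have "(THE a. i a = (\<Prod>\<sigma>\<in>Gal i. \<sigma> x)) = a"
    by (rule the_equality) (use a in \<open>auto simp: gal_norm_def\<close>)
  then show ?thesis unfolding ext_norm_def using a by simp
qed

lemma gal_norm_mult: "gal_norm (x * y) = gal_norm x * gal_norm y"
  unfolding gal_norm_def by (simp add: Gal_mult prod.distrib)

lemma gal_norm_emb: "gal_norm (i a) = i a ^ n"
  unfolding gal_norm_def using card_Gal by (simp add: Gal_fix)

lemma gal_norm_nonzero: "x \<noteq> 0 \<Longrightarrow> gal_norm x \<noteq> 0"
  unfolding gal_norm_def using finite_Gal by (simp add: Gal_eq_0_iff)

lemma ext_norm_mult: "ext_norm i (x * y) = ext_norm i x * ext_norm i y"
proof (rule injectivity)
  show "i (ext_norm i (x * y)) = i (ext_norm i x * ext_norm i y)"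
    by (simp add: hom_mult emb_ext_norm gal_norm_mult)
qed

lemma ext_norm_emb: "ext_norm i (i a) = a ^ n"
proof (rule injectivity)
  show "i (ext_norm i (i a)) = i (a ^ n)"
    by (simp add: hom_power emb_ext_norm gal_norm_emb)
qed

lemma ext_norm_nonzero: "x \<noteq> 0 \<Longrightarrow> ext_norm i x \<noteq> 0"
  using emb_ext_norm[of x] gal_norm_nonzero[of x] by auto

text \<open>Hilbert 90: the Lagrange resolvent \<open>y = \<Sum>\<^sub>k a\<^sub>k \<sigma>\<^sup>k(\<theta>)\<close> with
  \<open>a\<^sub>k = z \<sigma>(z) \<cdots> \<sigma>\<^sup>k\<^sup>-\<^sup>1(z)\<close> satisfies \<open>z \<sigma>(y) = y\<close>, and Dedekind independence
  provides \<open>\<theta>\<close> with \<open>y \<noteq> 0\<close>.\<close>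
lemma hilbert90:
  assumes z: "gal_norm z = 1"
  shows "\<exists>y. y \<noteq> 0 \<and> z = y / gen y"
proof -
  define a where "a k = (\<Prod>j<k. (gen ^^ j) z)" for k
  have "\<exists>\<theta>. (\<Sum>k<n. a k * (gen ^^ k) \<theta>) \<noteq> 0"
  proof (rule ccontr)
    assume "\<nexists>\<theta>. (\<Sum>k<n. a k * (gen ^^ k) \<theta>) \<noteq> 0"
    then have "a 0 = 0" using gen_powers_independent[of a 0] degree_pos by blast
    then show False by (simp add: a_def)
  qed
  then obtain \<theta> where y: "(\<Sum>k<n. a k * (gen ^^ k) \<theta>) \<noteq> 0" by blast
  define y where "y = (\<Sum>k<n. a k * (gen ^^ k) \<theta>)"
  interpret \<sigma>: field_hom gen using Gal_hom[OF gen_in_Gal] .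
  have a_Suc: "z * gen (a k) = a (Suc k)" for k
    unfolding a_def prod.lessThan_Suc_shift by (simp add: \<sigma>.hom_prod)
  have "z * gen y = (\<Sum>k<n. a (Suc k) * (gen ^^ Suc k) \<theta>)"
    unfolding y_def a_Suc[symmetric] by (simp add: \<sigma>.hom_sum \<sigma>.hom_mult sum_distrib_left mult.assoc)
  also have "\<dots> = (\<Sum>k<Suc n. a k * (gen ^^ k) \<theta>) - a 0 * \<theta>"
    unfolding sum.lessThan_Suc_shift by simp
  also have "(\<Sum>k<Suc n. a k * (gen ^^ k) \<theta>) = y + a n * (gen ^^ n) \<theta>"
    unfolding y_def by simp
  also have "a n = 1" using z unfolding a_def gal_norm_def prod_Gal .
  finally have "z * gen y = y" by (simp add: gen_power_degree a_def)
  moreover have "y \<noteq> 0" using y y_def by simp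
  ultimately show ?thesis by (intro exI[of _ y]) (simp add: field_simps)
qed

definition poly_gal_norm :: "'b poly \<Rightarrow> 'b poly" where
  "poly_gal_norm g = (\<Prod>\<tau>\<in>Gal i. map_poly \<tau> g)"

lemma map_poly_Gal_comp: "\<sigma> \<in> Gal i \<Longrightarrow> map_poly \<sigma> (map_poly \<tau> g) = map_poly (\<sigma> \<circ> \<tau>) g"
  by (rule map_poly_map_poly) (simp add: Gal_eq_0_iff)

lemma poly_gal_norm_in_range: "\<exists>Q. poly_gal_norm g = map_poly i Q"
proof -
  have "\<exists>a. coeff (poly_gal_norm g) k = i a" for k
  proof (rule fixed_imp_in_range)
    fix \<sigma> assume \<sigma>: "\<sigma> \<in> Gal i"
    interpret S: field_hom \<sigma> using Gal_hom[OF \<sigma>] .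
    interpret P: map_poly_comm_ring_hom \<sigma> ..
    have "map_poly \<sigma> (poly_gal_norm g) = (\<Prod>\<tau>\<in>Gal i. map_poly (\<sigma> \<circ> \<tau>) g)"
      unfolding poly_gal_norm_def by (simp add: P.hom_prod map_poly_Gal_comp[OF \<sigma>])
    also have "\<dots> = poly_gal_norm g" unfolding poly_gal_norm_def by (rule prod_Gal_comp_left[OF \<sigma>])
    finally have "map_poly \<sigma> (poly_gal_norm g) = poly_gal_norm g" .
    from arg_cong[OF this, of "\<lambda>p. coeff p k"]
    show "\<sigma> (coeff (poly_gal_norm g) k) = coeff (poly_gal_norm g) k" by (simp add: coeff_map_poly)
  qed
  then obtain h where h: "\<And>k. coeff (poly_gal_norm g) k = i (h k)" by metis
  have "poly_gal_norm g = map_poly i (Abs_poly h)"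
  proof -
    have "\<forall>\<^sub>\<infinity>k. h k = 0"
      using MOST_coeff_eq_0[of "poly_gal_norm g"] by (simp add: h)
    then show ?thesis by (intro poly_eqI) (simp add: coeff_map_poly h Abs_poly_inverse)
  qed
  then show ?thesis by blast
qed

lemma emb_poly_norm: "map_poly i (poly_norm i g) = poly_gal_norm g"
proof -
  interpret P: map_poly_inj_idom_hom i ..
  obtain Q where Q: "poly_gal_norm g = map_poly i Q" using poly_gal_norm_in_range by blast
  have "(THE P. map_poly i P = (\<Prod>\<sigma>\<in>Gal i. map_poly \<sigma> g)) = Q"
    by (rule the_equality) (use Q in \<open>auto simp: poly_gal_norm_def\<close>)
  then show ?thesis unfolding poly_norm_def using Q by simp
qed

lemma poly_norm_emb_mult: "poly_norm i (map_poly i C * Y) = C ^ n * poly_norm i Y"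
proof -
  interpret P: map_poly_inj_idom_hom i ..
  have "map_poly \<tau> (map_poly i C * Y) = map_poly i C * map_poly \<tau> Y" if \<tau>: "\<tau> \<in> Gal i" for \<tau>
  proof -
    interpret T0: field_hom \<tau> using Gal_hom[OF \<tau>] .
    interpret T: map_poly_comm_ring_hom \<tau> ..
    have "\<tau> \<circ> i = i" using Gal_fix[OF \<tau>] by auto
    then show ?thesis by (simp add: T.hom_mult map_poly_Gal_comp[OF \<tau>])
  qed
  then have "poly_gal_norm (map_poly i C * Y) = map_poly i C ^ n * poly_gal_norm Y"
    unfolding poly_gal_norm_def by (simp add: prod.distrib card_Gal)
  then have "map_poly i (poly_norm i (map_poly i C * Y)) = map_poly i (C ^ n * poly_norm i Y)"
    by (simp add: emb_poly_norm P.hom_mult P.hom_power)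
  then show ?thesis by (rule P.injectivity)
qed

lemma poly_norm_Gal: "\<sigma> \<in> Gal i \<Longrightarrow> poly_norm i (map_poly \<sigma> Y) = poly_norm i Y"
proof -
  assume \<sigma>: "\<sigma> \<in> Gal i"
  interpret P: map_poly_inj_idom_hom i ..
  have "poly_gal_norm (map_poly \<sigma> Y) = (\<Prod>\<tau>\<in>Gal i. map_poly (\<tau> \<circ> \<sigma>) Y)"
    unfolding poly_gal_norm_def by (intro prod.cong refl) (simp add: map_poly_Gal_comp)
  also have "\<dots> = poly_gal_norm Y" unfolding poly_gal_norm_def by (rule prod_Gal_comp_right[OF \<sigma>])
  finally have "map_poly i (poly_norm i (map_poly \<sigma> Y)) = map_poly i (poly_norm i Y)"
    by (simp add: emb_poly_norm)
  then show ?thesis by (rule P.injectivity)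
qed

end

section \<open>Valuations on cyclic extensions\<close>

locale valued_cyclic_extension = valued_extension v w i e + cyclic_extension i n
  for v :: "'a::field \<Rightarrow> int" and w :: "'b::field \<Rightarrow> int" and i e n
begin

lemma val_Gal:
  assumes \<tau>: "\<tau> \<in> Gal i" and x: "x \<noteq> 0"
  shows "w (\<tau> x) = w x"
proof -
  interpret \<tau>: field_hom \<tau> using Gal_hom[OF \<tau>] .
  have "discrete_valuation (w \<circ> \<tau>)"
    unfolding discrete_valuation_def
  proof (intro conjI allI impI)
    fix x y :: 'b assume "x \<noteq> 0" "y \<noteq> 0"
    then show "(w \<circ> \<tau>) (x * y) = (w \<circ> \<tau>) x + (w \<circ> \<tau>) y" by (simp add: \<tau>.hom_mult L.val_mult)
  next
    fix x y :: 'b assume "x \<noteq> 0" "y \<noteq> 0" "x + y \<noteq> 0"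
    then show "min ((w \<circ> \<tau>) x) ((w \<circ> \<tau>) y) \<le> (w \<circ> \<tau>) (x + y)"
      using L.val_ultrametric[of "\<tau> x" "\<tau> y"] by (simp flip: \<tau>.hom_add)
  next
    fix m :: int
    obtain z where z: "z \<noteq> 0" "w z = m" using L.val_surj by blast
    define x where "x = inv_into UNIV \<tau> z"
    have "\<tau> x = z" unfolding x_def using Gal_bij[OF \<tau>] by (simp add: bij_is_surj surj_f_inv_f)
    moreover from this have "x \<noteq> 0" using z(1) by auto
    ultimately show "\<exists>x. x \<noteq> 0 \<and> (w \<circ> \<tau>) x = m" using z(2) by (intro exI[of _ x]) simp
  qed
  then have "valued_extension v (w \<circ> \<tau>) i e"
    by (rule valued_extension_if_extends) (simp add: Gal_fix[OF \<tau>] val_emb)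
  moreover have "valued_extension v w i e" by unfold_locales
  ultimately have "w x = (w \<circ> \<tau>) x" by (rule val_extension_unique[OF _ _ ext_degree x])
  then show ?thesis by simp
qed

lemma val_gal_norm:
  assumes "x \<noteq> 0"
  shows "w (gal_norm x) = int n * w x"
proof -
  have "w (gal_norm x) = (\<Sum>\<tau>\<in>Gal i. w (\<tau> x))"
    unfolding gal_norm_def using finite_Gal assms by (simp add: L.val_prod Gal_eq_0_iff)
  also have "\<dots> = (\<Sum>\<tau>\<in>Gal i. w x)" using assms by (intro sum.cong) (simp_all add: val_Gal)
  finally show ?thesis using card_Gal by simp
qed

lemma val_ext_norm: "x \<noteq> 0 \<Longrightarrow> e * v (ext_norm i x) = int n * w x"
  using val_emb[OF ext_norm_nonzero] val_gal_norm by (simp add: emb_ext_norm)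

lemma ramification_eq_prime:
  assumes "prime n" "e > 1"
  shows "e = int n"
proof -
  obtain P where P: "P \<noteq> 0" "w P = 1" using L.val_surj by blast
  define q where "q = v (ext_norm i P)"
  have eq: "e * q = int n" using val_ext_norm[OF P(1)] P(2) unfolding q_def by simp
  then have "0 < e * q" using degree_pos by simp
  then have "q > 0" using assms(2) by (simp add: zero_less_mult_iff)
  then have "n = nat e * nat q" using eq assms(2) by (simp add: nat_mult_distrib[symmetric])
  then have "nat e dvd n" by simp
  then have "nat e = 1 \<or> nat e = n" using assms(1) unfolding prime_nat_iff by blast
  then show ?thesis using assms(2) by auto
qed

lemma ext_norm_principal_unit:
  assumes m: "val_ge w 1 m"
  shows "val_ge v 1 (ext_norm i (1 + m) - 1)"
proof -
  have "\<tau> (1 + m) = 1 + \<tau> m" if "\<tau> \<in> Gal i" for \<tau> using that by (simp add: Gal_add Gal_one)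
  then have "gal_norm (1 + m) = (\<Prod>\<tau>\<in>Gal i. 1 + \<tau> m)" unfolding gal_norm_def by simp
  moreover have "val_ge w 1 (\<tau> m)" if "\<tau> \<in> Gal i" for \<tau>
    using m val_Gal[OF that] by (cases "m = 0") (simp_all add: val_ge_def Gal_eq_0_iff that)
  ultimately have close: "val_ge w 1 (i (ext_norm i (1 + m) - 1))"
    using L.principal_unit_prod[of "Gal i" "\<lambda>\<tau>. \<tau> m"] by (simp add: emb_ext_norm hom_distribs)
  show ?thesis
  proof (cases "ext_norm i (1 + m) - 1 = 0")
    case False
    then have "1 \<le> e * v (ext_norm i (1 + m) - 1)" using close by (simp add: val_ge_def val_emb)
    moreover have "\<not> v (ext_norm i (1 + m) - 1) \<le> 0"
    proof
      assume "v (ext_norm i (1 + m) - 1) \<le> 0"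
      then have "e * v (ext_norm i (1 + m) - 1) \<le> 0" using ramification_pos by (simp add: mult_nonneg_nonpos)
      with \<open>1 \<le> e * v (ext_norm i (1 + m) - 1)\<close> show False by simp
    qed
    ultimately show ?thesis using False by (simp add: val_ge_def)
  qed simp
qed

end

lemma valued_cyclic_extensionI:
  assumes "cyclic_ext i n" "discrete_valuation v" "complete_wrt v" "discrete_valuation w"
    and "e > 0" "\<And>a. a \<noteq> 0 \<Longrightarrow> w (i a) = e * v a"
  shows "valued_cyclic_extension v w i e n"
proof -
  have "field_hom i" using assms(1) field_hom_if_field_emb unfolding cyclic_ext_def by blast
  then show ?thesis
    using assms unfolding valued_cyclic_extension_def valued_extension_def valued_extension_axioms_def
      complete_valued_field_def complete_valued_field_axioms_def valued_field_def cyclic_extension_def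
    by blast
qed

locale totally_ramified_extension = valued_cyclic_extension +
  assumes totally_ramified: "e = int n"
begin

lemma val_emb_eq: "a \<noteq> 0 \<Longrightarrow> w (i a) = int n * v a"
  using val_emb totally_ramified by simp

lemma val_diff_emb_mod_degree:
  assumes y: "y \<noteq> 0" "w y = 0" and far: "\<not> val_ge w 1 (y - i c)"
  shows "w (y - i c) mod int n = 0"
proof (cases "c = 0 \<or> v c \<ge> 0")
  case True
  have "val_ge w 0 (i c)"
  proof (cases "c = 0")
    case False
    then have "0 \<le> int n * v c" using True by (intro mult_nonneg_nonneg) auto
    then show ?thesis using val_emb_eq[OF False] by (simp add: val_ge_def)
  qed simp
  moreover have "val_ge w 0 y" using y by (simp add: val_ge_def)
  ultimately have "val_ge w 0 (y - i c)" by (rule L.val_ge_diff[rotated])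
  then have "w (y - i c) = 0" using far by (simp add: val_ge_def)
  then show ?thesis by simp
next
  case False
  then have c: "c \<noteq> 0" "v c < 0" by auto
  have "int n * v c \<le> int n * (- 1)" using c(2) by (intro mult_left_mono) auto
  then have "val_ge w (w (- i c) + 1) y"
    using y degree_pos val_emb_eq[OF c(1)] by (simp add: val_ge_def)
  then have "w (- i c + y) = w (- i c)" using L.val_add_eq_left(2)[of "- i c" y] c(1) by simp
  then show ?thesis using val_emb_eq[OF c(1)] by (simp add: add.commute)
qed

text \<open>If the unit \<open>y\<close> had no residue in \<open>F\<close>, a linear relation between \<open>1, P, \<dots>, P\<^sup>n\<^sup>-\<^sup>1, y\<close>
  (\<open>P\<close> a uniformizer) would have terms of pairwise distinct valuations modulo \<open>n\<close>.\<close>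
lemma residue_lift:
  assumes y: "y \<noteq> 0" "w y = 0"
  shows "\<exists>c. val_ge w 1 (y - i c)"
proof (rule ccontr)
  assume no_lift: "\<nexists>c. val_ge w 1 (y - i c)"
  obtain P where P: "P \<noteq> 0" "w P = 1" using L.val_surj by blast
  obtain l where l: "\<exists>j<Suc n. l j \<noteq> 0" "(\<Sum>j<n. i (l j) * P ^ j) + i (l n) * y = 0"
    by (rule lin_dependent_powers)
  define f where "f j = i (l j) * P ^ j + (if j = 0 then i (l n) * y else 0)" for j
  have "(\<Sum>j<n. f j) = (\<Sum>j<n. i (l j) * P ^ j) + i (l n) * y"
    unfolding f_def using degree_pos by (simp add: sum.distrib)
  with l(2) have sum_f: "(\<Sum>j<n. f j) = 0" by simp
  have "w (f j) mod int n = int j" if j: "j < n" "f j \<noteq> 0" for j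
  proof (cases "j = 0 \<and> l n \<noteq> 0")
    case True
    define c where "c = - (l 0 / l n)"
    have "i (l n) * i c = - i (l 0)" unfolding c_def using True by (simp add: hom_distribs)
    then have "f j = i (l n) * (y - i c)"
      unfolding f_def using True by (simp add: right_diff_distrib)
    moreover from this have "y - i c \<noteq> 0" using j(2) by auto
    moreover have "w (y - i c) mod int n = 0" using val_diff_emb_mod_degree[OF y] no_lift by blast
    ultimately show ?thesis using True by (simp add: L.val_mult val_emb_eq)
  next
    case False
    then have "f j = i (l j) * P ^ j" unfolding f_def by auto
    moreover from this have "l j \<noteq> 0" using j(2) by auto
    ultimately have "w (f j) = int n * v (l j) + int j" using P by (simp add: L.val_mult L.val_power val_emb_eq)
    then show ?thesis using j(1) by simp
  qed
  then have f0: "\<forall>j<n. f j = 0" using L.terms_eq_0_if_val_residues_distinct sum_f by blast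
  have "l n = 0"
  proof (rule ccontr)
    assume ln: "l n \<noteq> 0"
    have "f 0 = 0" using f0 degree_pos by blast
    then have "i (l n) * y = - i (l 0)" unfolding f_def by (simp add: eq_neg_iff_add_eq_0 add.commute)
    moreover have "i (l n) * i (- (l 0 / l n)) = - i (l 0)" using ln by (simp add: hom_distribs)
    ultimately have "i (l n) * y = i (l n) * i (- (l 0 / l n))" by simp
    then have "y = i (- (l 0 / l n))" using ln by simp
    then have "val_ge w 1 (y - i (- (l 0 / l n)))" by simp
    then show False using no_lift by blast
  qed
  moreover have "l j = 0" if "j < n" for j
    using f0 that P(1) \<open>l n = 0\<close> unfolding f_def by (cases "j = 0") auto
  moreover obtain j where "j < Suc n" "l j \<noteq> 0" using l(1) by blast
  ultimately show False using less_Suc_eq[of j n] by auto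
qed

lemma unit_eq_emb_mult_principal:
  assumes y: "y \<noteq> 0" "w y = 0"
  obtains c m where "c \<noteq> 0" "val_ge w 1 m" "y = i c * (1 + m)"
proof -
  obtain c where c: "val_ge w 1 (y - i c)" using residue_lift[OF y] by blast
  then have "val_ge w (w y + 1) (- (y - i c))" using y(2) L.val_ge_uminus[of "w y + 1" "y - i c"] by simp
  then have "w (i c) = 0" using L.val_add_eq_left(2)[OF y(1), of "- (y - i c)"] y by simp
  moreover have c0: "c \<noteq> 0" using c y by (auto simp: val_ge_def)
  ultimately have "val_ge w (1 + 0) ((y - i c) / i c)"
    using L.val_ge_mult[OF c, of 0 "inverse (i c)"] by (simp add: divide_inverse val_ge_def L.val_inverse)
  moreover have "y = i c * (1 + (y - i c) / i c)" using c0 by (simp add: field_simps)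
  ultimately show ?thesis using that c0 by simp
qed

lemma ext_norm_pth_power:
  assumes p: "residue_char_neq v n" and x: "x \<noteq> 0" and dvd: "int n dvd w x"
  shows "\<exists>c. c \<noteq> 0 \<and> ext_norm i x = c ^ n"
proof -
  obtain k where k: "w x = int n * k" using dvd by blast
  obtain a where a: "a \<noteq> 0" "v a = - k" using F.val_surj by blast
  have "x * i a \<noteq> 0" "w (x * i a) = 0" using x a k by (simp_all add: L.val_mult val_emb_eq)
  then obtain c m where cm: "c \<noteq> 0" "val_ge w 1 m" "x * i a = i c * (1 + m)"
    by (rule unit_eq_emb_mult_principal)
  obtain r where r: "r ^ n = ext_norm i (1 + m)"
    using F.pth_root_of_principal_unit[OF p degree_pos ext_norm_principal_unit[OF cm(2)]] by blast
  have "1 + m \<noteq> 0" using cm \<open>x * i a \<noteq> 0\<close> by auto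
  then have "ext_norm i (1 + m) \<noteq> 0" by (rule ext_norm_nonzero)
  then have r0: "r \<noteq> 0" using r degree_pos by (auto simp: power_0_left)
  have "ext_norm i x * a ^ n = (c * r) ^ n"
    using arg_cong[OF cm(3), of "ext_norm i"] r by (simp add: ext_norm_mult ext_norm_emb power_mult_distrib)
  then have "ext_norm i x = (c * r / a) ^ n" using a(1) by (simp add: power_divide field_simps)
  then show ?thesis using cm(1) r0 a(1) by (intro exI[of _ "c * r / a"]) simp
qed

end

section \<open>R-equivalence on the multinorm torus\<close>

text \<open>The curve lies on the torus: \<open>Y\<^sub>k\<close> and \<open>\<sigma>\<^sub>k(Y\<^sub>k)\<close> have the same norm,
  and the constant polynomial \<open>\<phi>\<close> over \<open>F\<close> contributes \<open>\<phi>\<^sup>n\<close> to both sides.\<close>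
lemma R_link_coboundaries:
  assumes L1: "cyclic_ext i1 n" and L2: "cyclic_ext i2 n"
    and \<sigma>: "\<sigma>1 \<in> Gal i1" "\<sigma>2 \<in> Gal i2" and nonzero: "c \<noteq> 0" "y1 \<noteq> 0" "y2 \<noteq> 0"
  shows "R_link i1 i2 (1, 1) (i1 c * y1 / \<sigma>1 y1, y2 / (i2 c * \<sigma>2 y2))"
proof -
  interpret L1: cyclic_extension i1 n using L1 by (rule cyclic_extension.intro)
  interpret L2: cyclic_extension i2 n using L2 by (rule cyclic_extension.intro)
  interpret \<sigma>1: field_hom \<sigma>1 using L1.Gal_hom[OF \<sigma>(1)] .
  interpret \<sigma>2: field_hom \<sigma>2 using L2.Gal_hom[OF \<sigma>(2)] .
  define \<phi> where "\<phi> = [:1, c - 1:]"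
  define Y1 where "Y1 = [:1, y1 - 1:]"
  define Y2 where "Y2 = [:1, y2 - 1:]"
  define g1 where "g1 = map_poly i1 \<phi> * Y1"
  define h1 where "h1 = map_poly \<sigma>1 Y1"
  define g2 where "g2 = Y2"
  define h2 where "h2 = map_poly i2 \<phi> * map_poly \<sigma>2 Y2"
  have "poly_norm i1 g1 = \<phi> ^ n * poly_norm i1 Y1"
    unfolding g1_def by (rule L1.poly_norm_emb_mult)
  moreover have "poly_norm i1 h1 = poly_norm i1 Y1"
    unfolding h1_def by (rule L1.poly_norm_Gal[OF \<sigma>(1)])
  moreover have "poly_norm i2 h2 = \<phi> ^ n * poly_norm i2 Y2"
    unfolding h2_def L2.poly_norm_emb_mult L2.poly_norm_Gal[OF \<sigma>(2)] ..
  ultimately have "poly_norm i1 g1 * poly_norm i2 g2 = poly_norm i1 h1 * poly_norm i2 h2"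
    unfolding g2_def by (simp only: mult_ac)
  moreover have "poly g1 0 = 1" "poly h1 0 = 1" "poly g2 0 = 1" "poly h2 0 = 1"
    unfolding g1_def h1_def g2_def h2_def \<phi>_def Y1_def Y2_def by (simp_all add: map_poly_pCons)
  moreover have "poly g1 1 = i1 c * y1" "poly h1 1 = \<sigma>1 y1" "poly g2 1 = y2" "poly h2 1 = i2 c * \<sigma>2 y2"
    unfolding g1_def h1_def g2_def h2_def \<phi>_def Y1_def Y2_def by (simp_all add: map_poly_pCons hom_distribs algebra_simps)
  ultimately show ?thesis
    unfolding R_link_def using nonzero
    by (intro exI[of _ g1] exI[of _ h1] exI[of _ g2] exI[of _ h2]) simp
qed

lemma R_link_if_norms_powers:
  assumes L1: "cyclic_ext i1 n" and L2: "cyclic_ext i2 n"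
    and nonzero: "c \<noteq> 0" "x1 \<noteq> 0" "x2 \<noteq> 0"
    and norms: "ext_norm i1 x1 = c ^ n" "ext_norm i2 x2 * c ^ n = 1"
  shows "R_link i1 i2 (1, 1) (x1, x2)"
proof -
  interpret L1: cyclic_extension i1 n using L1 by (rule cyclic_extension.intro)
  interpret L2: cyclic_extension i2 n using L2 by (rule cyclic_extension.intro)
  have "ext_norm i1 (x1 * i1 (inverse c)) = 1" "ext_norm i2 (x2 * i2 c) = 1"
    using norms nonzero by (simp_all add: L1.ext_norm_mult L1.ext_norm_emb L2.ext_norm_mult L2.ext_norm_emb
        power_inverse field_simps)
  then have "L1.gal_norm (x1 * i1 (inverse c)) = 1" "L2.gal_norm (x2 * i2 c) = 1"
    by (simp_all flip: L1.emb_ext_norm L2.emb_ext_norm)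
  then obtain y1 y2 where y1: "y1 \<noteq> 0" "x1 * i1 (inverse c) = y1 / L1.gen y1"
    and y2: "y2 \<noteq> 0" "x2 * i2 c = y2 / L2.gen y2"
    using L1.hilbert90 L2.hilbert90 by metis
  have "L1.gen y1 \<noteq> 0" "L2.gen y2 \<noteq> 0"
    using y1 y2 L1.Gal_eq_0_iff[OF L1.gen_in_Gal] L2.Gal_eq_0_iff[OF L2.gen_in_Gal] by auto
  then have "x1 = i1 c * y1 / L1.gen y1" "x2 = y2 / (i2 c * L2.gen y2)"
    using y1 y2 nonzero by (simp_all add: hom_distribs field_simps)
  then show ?thesis
    using R_link_coboundaries[OF L1 L2 L1.gen_in_Gal L2.gen_in_Gal nonzero(1) y1(1) y2(1)] by simp
qed

lemma multinorm_second_norm_pth_power: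
  assumes "discrete_valuation v" "complete_wrt v" "prime p" "residue_char_neq v p"
    and "cyclic_ext i1 p" "unramified_ext v i1" "cyclic_ext i2 p" "ramified_ext v i2"
    and x: "x1 \<noteq> 0" "x2 \<noteq> 0" and norm: "ext_norm i1 x1 * ext_norm i2 x2 = 1"
  shows "\<exists>c. c \<noteq> 0 \<and> ext_norm i2 x2 = c ^ p"
proof -
  obtain w1 where w1: "discrete_valuation w1" "\<And>a. a \<noteq> 0 \<Longrightarrow> w1 (i1 a) = 1 * v a"
    using assms(6) unfolding unramified_ext_def by auto
  interpret L1: valued_cyclic_extension v w1 i1 1 p
    using valued_cyclic_extensionI[OF assms(5,1,2) w1(1) _ w1(2)] by simp
  obtain w2 e where w2: "discrete_valuation w2" "e > 1" "\<And>a. a \<noteq> 0 \<Longrightarrow> w2 (i2 a) = e * v a"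
    using assms(8) unfolding ramified_ext_def by auto
  have L2: "valued_cyclic_extension v w2 i2 e p"
    using valued_cyclic_extensionI[OF assms(7,1,2) w2(1) _ w2(3)] w2(2) by simp
  then have "e = int p" using valued_cyclic_extension.ramification_eq_prime assms(3) w2(2) by blast
  interpret L2: totally_ramified_extension v w2 i2 e p
    using L2 \<open>e = int p\<close> by (simp add: totally_ramified_extension_def totally_ramified_extension_axioms_def)
  have "v (ext_norm i1 x1) + v (ext_norm i2 x2) = 0"
    using norm L1.F.val_mult[OF L1.ext_norm_nonzero[OF x(1)] L2.ext_norm_nonzero[OF x(2)]] by simp
  then have "w2 x2 = int p * (- w1 x1)"
    using L1.val_ext_norm[OF x(1)] L2.val_ext_norm[OF x(2)] L2.totally_ramified L2.degree_pos by simp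
  then have "int p dvd w2 x2" by (rule dvdI)
  then show ?thesis using L2.ext_norm_pth_power[OF assms(4) x(2)] by blast
qed

theorem mainTheorem16:
  fixes v :: "'a::field \<Rightarrow> int"
    and i1 :: "'a \<Rightarrow> 'b::field"
    and i2 :: "'a \<Rightarrow> 'c::field"
    and p :: nat
  assumes "discrete_valuation v" and "complete_wrt v"
    and "prime p" and "residue_char_neq v p"
    and "cyclic_ext i1 p" and "unramified_ext v i1"
    and "cyclic_ext i2 p" and "ramified_ext v i2"
  shows "\<forall>x \<in> multinorm_torus i1 i2. R_equiv i1 i2 (1, 1) x"
proof
  fix x assume "x \<in> multinorm_torus i1 i2"
  then obtain x1 x2 where x: "x = (x1, x2)" "x1 \<noteq> 0" "x2 \<noteq> 0"
    and norm: "ext_norm i1 x1 * ext_norm i2 x2 = 1"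
    unfolding multinorm_torus_def by auto
  obtain c where c: "c \<noteq> 0" "ext_norm i2 x2 = c ^ p"
    using multinorm_second_norm_pth_power[OF assms x(2,3) norm] by blast
  then have "ext_norm i1 x1 = inverse c ^ p" using norm by (simp add: power_inverse field_simps)
  then have "R_link i1 i2 (1, 1) (x1, x2)"
    using R_link_if_norms_powers[OF assms(5,7), of "inverse c"] c x by (simp add: power_inverse)
  then show "R_equiv i1 i2 (1, 1) x" unfolding R_equiv_def x by (intro r_into_rtranclp) simp
qed

end
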